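(* Let $h$ be an increasing, locally absolutely continuous homeomorphism of $\mathbb R$ onto itself such that $\|\log h'\|_{H^{1/2}}<\infty$. Then $h$ is strongly quasisymmetric.
   Context: $\|\varphi\|^2_{H^{1/2}}=\frac1{4\pi^2}\int_{\mathbb R}\int_{\mathbb R}\frac{|\varphi(s)-\varphi(t)|^2}{|s-t|^2}ds\,dt$. A sense-preserving homeomorphism $h$ of $\mathbb R$ onto itself is strongly quasisymmetric if it is locally absolutely continuous and $|h'|$ belongs to the Muckenhoupt class of weights $A_\infty$. *)

theory Defs
  imports "HOL-Analysis.Analysis"
begin

definition abs_cont_on_interval :: "real \<Rightarrow> real \<Rightarrow> (real \<Rightarrow> real) \<Rightarrow> bool" where
  "abs_cont_on_interval c d f \<longleftrightarrow>
     (\<forall>\<epsilon>>0. \<exists>\<delta>>0. \<forall>(n::nat) (a::nat \<Rightarrow> real) (b::nat \<Rightarrow> real).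
        (\<forall>i<n. c \<le> a i \<and> a i \<le> b i \<and> b i \<le> d) \<and>
        (\<forall>i<n. \<forall>j<n. i \<noteq> j \<longrightarrow> b i \<le> a j \<or> b j \<le> a i) \<and>
        (\<Sum>i<n. b i - a i) < \<delta>
        \<longrightarrow> (\<Sum>i<n. \<bar>f (b i) - f (a i)\<bar>) < \<epsilon>)"

definition locally_abs_cont :: "(real \<Rightarrow> real) \<Rightarrow> bool" where
  "locally_abs_cont f \<longleftrightarrow> (\<forall>c d. c \<le> d \<longrightarrow> abs_cont_on_interval c d f)"

text \<open>Muckenhoupt class A_infinity (Coifman--Fefferman form): w is a nonnegative
  locally integrable weight and there are C, alpha > 0 such that for every
  bounded interval I and every measurable E contained in I,
  w(E)/w(I) <= C (|E|/|I|)^alpha.\<close>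
definition A_infinity :: "(real \<Rightarrow> real) \<Rightarrow> bool" where
  "A_infinity w \<longleftrightarrow>
     (AE x in lebesgue. 0 \<le> w x) \<and>
     (\<forall>a b. set_integrable lebesgue {a..b} w) \<and>
     (\<exists>C>0. \<exists>\<alpha>>0. \<forall>a b. a < b \<longrightarrow>
        (\<forall>E \<in> sets lebesgue. E \<subseteq> {a..b} \<longrightarrow>
           (LINT x:E|lebesgue. w x) \<le>
             C * (measure lebesgue E / (b - a)) powr \<alpha> * (LINT x:{a..b}|lebesgue. w x)))"

definition strongly_quasisymmetric :: "(real \<Rightarrow> real) \<Rightarrow> bool" where
  "strongly_quasisymmetric h \<longleftrightarrow>
     strict_mono h \<and> (\<exists>g. homeomorphism UNIV UNIV h g) \<and>
     locally_abs_cont h \<and> A_infinity (\<lambda>x. \<bar>deriv h x\<bar>)"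

definition H12_sq :: "(real \<Rightarrow> real) \<Rightarrow> ennreal" where
  "H12_sq \<phi> = ennreal (1 / (4 * pi^2)) *
     (\<integral>\<^sup>+ s. (\<integral>\<^sup>+ t. ennreal ((\<phi> s - \<phi> t)^2 / (s - t)^2) \<partial>lebesgue) \<partial>lebesgue)"

end

theory Submission
  imports Defs
begin

text \<open>Put \<open>\<phi> = ln h'\<close> and fix an interval \<open>I\<close>. The averages of \<open>\<phi>\<close> over the dyadic
  subintervals of \<open>I\<close> form a martingale whose increment on a dyadic interval \<open>J\<close> is half the
  difference of the averages over the two halves of \<open>J\<close>. By Jensen's inequality the square of
  this increment is at most the Gagliardo energy of \<open>\<phi>\<close> between the two halves; these cross
  energies are disjoint pieces of \<open>K = \<parallel>\<phi>\<parallel>\<^sup>2\<close> (up to normalisation), so Hoeffding's argument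
  bounds every exponential moment of the martingale, and Fatou's lemma gives
  \<open>\<integral>\<^sub>I exp (t (\<phi> - \<phi>\<^sub>I)) \<le> |I| exp (t\<^sup>2 K / 2)\<close>, \<open>\<phi>\<^sub>I\<close> the mean of \<open>\<phi>\<close> over \<open>I\<close>.
  For \<open>E \<subseteq> I\<close>, Cauchy--Schwarz with \<open>t = 2\<close> and the Jensen bound \<open>\<integral>\<^sub>I exp (\<phi> - \<phi>\<^sub>I) \<ge> |I|\<close>
  then give \<open>h'(E) \<le> e\<^sup>K (|E| / |I|)\<^sup>1\<^sup>/\<^sup>2 h'(I)\<close>, the \<open>A\<^sub>\<infinity>\<close> condition.\<close>

section \<open>Hoeffding's inequality for the dyadic martingale\<close>

lemma cosh_le_exp_half_square:
  fixes y :: real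
  shows "cosh y \<le> exp (y^2 / 2)"
proof -
  have sinh_le: "sinh t \<le> t * cosh t" if "0 \<le> t" for t :: real
  proof -
    have "(\<lambda>t. t * cosh t - sinh t) 0 \<le> (\<lambda>t. t * cosh t - sinh t) t"
    proof (rule DERIV_nonneg_imp_nondecreasing[OF that])
      fix x :: real assume "0 \<le> x" "x \<le> t"
      then show "\<exists>d. ((\<lambda>t. t * cosh t - sinh t) has_real_derivative d) (at x) \<and> 0 \<le> d"
        by (intro exI[of _ "x * sinh x"] conjI) (auto intro!: derivative_eq_intros)
    qed
    then show ?thesis by simp
  qed
  have "(\<lambda>t. t^2/2 - ln (cosh t)) 0 \<le> (\<lambda>t. t^2/2 - ln (cosh t)) \<bar>y\<bar>"
  proof (rule DERIV_nonneg_imp_nondecreasing[of 0 "\<bar>y\<bar>"])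
    fix x :: real assume x: "0 \<le> x"
    have "sinh x / cosh x \<le> x"
      using sinh_le[OF x] cosh_real_pos[of x] by (simp add: divide_le_eq)
    then show "\<exists>d. ((\<lambda>t. t^2/2 - ln (cosh t)) has_real_derivative d) (at x) \<and> 0 \<le> d"
      using cosh_real_pos[of x]
      by (intro exI[of _ "x - sinh x / cosh x"] conjI) (auto intro!: derivative_eq_intros)
  qed simp
  moreover have "cosh \<bar>y\<bar> = cosh y"
    by (cases "0 \<le> y") auto
  ultimately have "ln (cosh y) \<le> y^2 / 2"
    by simp
  then show ?thesis
    by (metis cosh_real_pos exp_le_cancel_iff exp_ln)
qed

lemma two_point_exp_le:
  fixes y s A B L :: real
  assumes "0 \<le> s" "0 \<le> A" "0 \<le> B" "0 \<le> L"
  shows "exp y * (L/2 * exp (s * A)) + exp (- y) * (L/2 * exp (s * B))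
           \<le> L * exp (y^2 / 2 + s * (A + B))"
proof -
  have "exp (s * A) \<le> exp (s * (A + B))" "exp (s * B) \<le> exp (s * (A + B))"
    using assms by (auto intro!: mult_left_mono)
  then have "exp y * (L/2 * exp (s * A)) + exp (- y) * (L/2 * exp (s * B))
      \<le> exp y * (L/2 * exp (s * (A + B))) + exp (- y) * (L/2 * exp (s * (A + B)))"
    using assms by (intro add_mono mult_left_mono) auto
  also have "\<dots> = L * cosh y * exp (s * (A + B))"
    by (simp add: cosh_def algebra_simps)
  also have "\<dots> \<le> L * exp (y^2 / 2) * exp (s * (A + B))"
    using assms cosh_le_exp_half_square[of y] by (intro mult_right_mono mult_left_mono) auto
  finally show ?thesis
    by (simp add: exp_add mult.assoc)
qed

definition interval_avg :: "(real \<Rightarrow> real) \<Rightarrow> real \<Rightarrow> real \<Rightarrow> real" where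
  "interval_avg f c L = (LINT x:{c..<c+L}|lborel. f x) / L"

text \<open>\<^term>\<open>dyadic_avg f n c L\<close> is the \<open>n\<close>-th term of the dyadic martingale of \<^term>\<open>f\<close> on
  \<^term>\<open>{c..<c+L}\<close>. \<^term>\<open>dyadic_sq_increments f n c L\<close> sums its squared increments over all
  dyadic subintervals of generation below \<open>n\<close>, which dominates the square function at every point.\<close>

primrec dyadic_avg :: "(real \<Rightarrow> real) \<Rightarrow> nat \<Rightarrow> real \<Rightarrow> real \<Rightarrow> real \<Rightarrow> real" where
  "dyadic_avg f 0 c L x = interval_avg f c L"
| "dyadic_avg f (Suc n) c L x =
     (if x < c + L/2 then dyadic_avg f n c (L/2) x else dyadic_avg f n (c + L/2) (L/2) x)"

primrec dyadic_sq_increments :: "(real \<Rightarrow> real) \<Rightarrow> nat \<Rightarrow> real \<Rightarrow> real \<Rightarrow> real" where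
  "dyadic_sq_increments f 0 c L = 0"
| "dyadic_sq_increments f (Suc n) c L =
     ((interval_avg f c (L/2) - interval_avg f (c + L/2) (L/2)) / 2)^2
     + dyadic_sq_increments f n c (L/2) + dyadic_sq_increments f n (c + L/2) (L/2)"

lemma dyadic_sq_increments_nonneg: "0 \<le> dyadic_sq_increments f n c L"
  by (induction n arbitrary: c L) auto

lemma dyadic_avg_measurable [measurable]: "dyadic_avg f n c L \<in> borel_measurable borel"
proof (induction n arbitrary: c L)
  case (Suc n)
  have "(\<lambda>x. if x < c + L/2 then dyadic_avg f n c (L/2) x else dyadic_avg f n (c + L/2) (L/2) x)
          \<in> borel_measurable borel"
    using Suc by measurable
  then show ?case by simp
next
  case 0
  have "dyadic_avg f 0 c L = (\<lambda>_. interval_avg f c L)"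
    by auto
  then show ?case by simp
qed

lemma nn_integral_Ico_halves:
  fixes F :: "real \<Rightarrow> ennreal"
  assumes [measurable]: "F \<in> borel_measurable borel" and "0 < L"
  shows "(\<integral>\<^sup>+x\<in>{c..<c+L}. F x \<partial>lborel) =
         (\<integral>\<^sup>+x\<in>{c..<c+L/2}. F x \<partial>lborel) + (\<integral>\<^sup>+x\<in>{c+L/2..<c+L}. F x \<partial>lborel)"
proof -
  have "{c..<c+L} = {c..<c+L/2} \<union> {c+L/2..<c+L}"
    using assms(2) by auto
  then show ?thesis
    by (simp add: nn_integral_disjoint_pair)
qed

lemma interval_avg_halves:
  assumes "set_integrable lborel {c..<c+L} f" and "0 < L"
  shows "interval_avg f c L = (interval_avg f c (L/2) + interval_avg f (c + L/2) (L/2)) / 2"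
proof -
  have "{c..<c+L} = {c..<c+L/2} \<union> {c+L/2..<c+L}" and e: "c + L/2 + L/2 = c + L"
    using assms(2) by auto
  moreover have "set_integrable lborel {c..<c+L/2} f" "set_integrable lborel {c+L/2..<c+L} f"
    by (rule set_integrable_subset[OF assms(1)]; use assms(2) in auto)+
  ultimately have "(LINT x:{c..<c+L}|lborel. f x)
      = (LINT x:{c..<c+L/2}|lborel. f x) + (LINT x:{c+L/2..<c+L}|lborel. f x)"
    by (simp add: set_integral_Un)
  then show ?thesis
    using assms(2) unfolding interval_avg_def e by (simp add: field_simps)
qed

lemma nn_integral_exp_shift:
  fixes u :: "'a \<Rightarrow> real"
  assumes [measurable]: "u \<in> borel_measurable M" "A \<in> sets M"
  shows "(\<integral>\<^sup>+x\<in>A. ennreal (exp (t * (u x - m))) \<partial>M)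
           = ennreal (exp (t * (m' - m))) * (\<integral>\<^sup>+x\<in>A. ennreal (exp (t * (u x - m'))) \<partial>M)"
proof -
  have "exp (t * (u x - m)) = exp (t * (m' - m)) * exp (t * (u x - m'))" for x
    by (simp add: exp_add[symmetric] algebra_simps)
  then have "(\<integral>\<^sup>+x\<in>A. ennreal (exp (t * (u x - m))) \<partial>M)
      = (\<integral>\<^sup>+x. ennreal (exp (t * (m' - m))) * (ennreal (exp (t * (u x - m'))) * indicator A x) \<partial>M)"
    by (simp add: ennreal_mult mult.assoc)
  also have "\<dots> = ennreal (exp (t * (m' - m))) * (\<integral>\<^sup>+x\<in>A. ennreal (exp (t * (u x - m'))) \<partial>M)"
    by (rule nn_integral_cmult) measurable
  finally show ?thesis .
qed

text \<open>Hoeffding's argument: on each half the increment of the martingale is the constant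
  \<open>\<plusminus>a\<close>, and \<open>cosh (t a) \<le> exp (t\<^sup>2 a\<^sup>2 / 2)\<close>.\<close>

lemma dyadic_avg_exp_moment_le:
  assumes int: "\<And>a b. set_integrable lborel {a..<b} f" and "0 < L"
  shows "(\<integral>\<^sup>+x\<in>{c..<c+L}. ennreal (exp (t * (dyadic_avg f n c L x - interval_avg f c L))) \<partial>lborel)
           \<le> ennreal (L * exp (t^2 * dyadic_sq_increments f n c L / 2))"
  using \<open>0 < L\<close>
proof (induction n arbitrary: c L)
  case 0
  have "(\<integral>\<^sup>+x\<in>{c..<c+L}. ennreal (exp (t * (dyadic_avg f 0 c L x - interval_avg f c L))) \<partial>lborel)
      = emeasure lborel {c..<c+L}"
    by (simp add: nn_integral_indicator[symmetric] del: nn_integral_indicator)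
  then show ?case
    using "0" by simp
next
  case (Suc n)
  let ?m = "interval_avg f c L" and ?ml = "interval_avg f c (L/2)"
    and ?mr = "interval_avg f (c + L/2) (L/2)"
  let ?E = "\<lambda>c' m. \<integral>\<^sup>+x\<in>{c'..<c'+L/2}. ennreal (exp (t * (dyadic_avg f n c' (L/2) x - m))) \<partial>lborel"
  let ?A = "dyadic_sq_increments f n c (L/2)" and ?B = "dyadic_sq_increments f n (c + L/2) (L/2)"
  define a where "a = (?ml - ?mr) / 2"
  have m: "?ml - ?m = a" "?mr - ?m = - a"
    using interval_avg_halves[OF int Suc.prems] by (auto simp: a_def field_simps)
  have "(\<integral>\<^sup>+x\<in>{c..<c+L}. ennreal (exp (t * (dyadic_avg f (Suc n) c L x - ?m))) \<partial>lborel)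
      = ?E c ?m + ?E (c + L/2) ?m"
    using Suc.prems
    by (subst nn_integral_Ico_halves) (auto intro!: arg_cong2[where f="(+)"] set_nn_integral_cong)
  also have "\<dots> = ennreal (exp (t * a)) * ?E c ?ml + ennreal (exp (- (t * a))) * ?E (c + L/2) ?mr"
    using nn_integral_exp_shift[of "dyadic_avg f n c (L/2)" lborel "{c..<c+L/2}" t ?m ?ml]
      nn_integral_exp_shift[of "dyadic_avg f n (c + L/2) (L/2)" lborel "{c+L/2..<c+L/2+L/2}" t ?m ?mr]
    by (simp add: m)
  also have "\<dots> \<le> ennreal (exp (t * a)) * ennreal (L/2 * exp (t^2 * ?A / 2))
      + ennreal (exp (- (t * a))) * ennreal (L/2 * exp (t^2 * ?B / 2))"
    using Suc.prems by (intro add_mono mult_left_mono Suc.IH) auto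
  also have "\<dots> = ennreal (exp (t * a) * (L/2 * exp (t^2/2 * ?A)) + exp (- (t * a)) * (L/2 * exp (t^2/2 * ?B)))"
    using Suc.prems by (simp add: ennreal_mult[symmetric] ennreal_plus[symmetric] del: ennreal_plus)
  also have "\<dots> \<le> ennreal (L * exp ((t * a)^2 / 2 + t^2/2 * (?A + ?B)))"
    using Suc.prems by (intro ennreal_leI two_point_exp_le) (auto simp: dyadic_sq_increments_nonneg)
  also have "\<dots> = ennreal (L * exp (t^2 * dyadic_sq_increments f (Suc n) c L / 2))"
  proof -
    have "(t * a)^2 / 2 + t^2/2 * (?A + ?B) = t^2 * (a^2 + ?A + ?B) / 2"
      by (simp add: power_mult_distrib field_simps)
    moreover have "dyadic_sq_increments f (Suc n) c L = a^2 + ?A + ?B"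
      by (simp add: a_def)
    ultimately show ?thesis by (simp only:)
  qed
  finally show ?case .
qed

section \<open>Cauchy--Schwarz and Jensen inequalities\<close>

lemma square_le_of_quadratic_nonneg:
  fixes S U \<mu> :: real
  assumes "0 \<le> \<mu>" and nonneg: "\<And>l. 0 \<le> S - 2 * l * U + l^2 * \<mu>"
  shows "U^2 \<le> \<mu> * S"
proof (cases "\<mu> = 0")
  case True
  have "U = 0"
  proof (rule ccontr)
    assume "U \<noteq> 0"
    then have "S - 2 * ((S + 1) / (2 * U)) * U = -1"
      by (simp add: field_simps)
    then show False
      using nonneg[of "(S + 1) / (2 * U)"] True by simp
  qed
  then show ?thesis using True by simp
next
  case False
  with assms(1) have "0 < \<mu>" by simp
  have "S - 2 * (U / \<mu>) * U + (U / \<mu>)^2 * \<mu> = S - U^2 / \<mu>"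
    using \<open>0 < \<mu>\<close> by (simp add: power2_eq_square field_simps)
  then have "0 \<le> S - U^2 / \<mu>"
    using nonneg[of "U / \<mu>"] by simp
  then show ?thesis
    using \<open>0 < \<mu>\<close> by (simp add: field_simps)
qed

lemma set_integral_square_le:
  fixes u :: "'a \<Rightarrow> real"
  assumes "set_integrable M A u" "set_integrable M A (\<lambda>x. (u x)^2)"
    and "A \<in> sets M" "emeasure M A < \<infinity>"
  shows "(LINT x:A|M. u x)^2 \<le> measure M A * (LINT x:A|M. (u x)^2)"
proof (rule square_le_of_quadratic_nonneg)
  fix l :: real
  have const: "set_integrable M A (\<lambda>x. k)" for k :: real
    using assms(3,4) unfolding set_integrable_def by simp
  have "0 \<le> (LINT x:A|M. (u x - l)^2)"
    unfolding set_lebesgue_integral_def by (intro integral_nonneg_AE) auto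
  also have "(LINT x:A|M. (u x - l)^2) = (LINT x:A|M. (u x)^2 - (2 * l) * u x + l^2)"
    by (intro set_lebesgue_integral_cong assms(3)) (auto simp: power2_eq_square algebra_simps)
  also have "\<dots> = (LINT x:A|M. (u x)^2) - 2 * l * (LINT x:A|M. u x) + l^2 * measure M A"
    using assms const by (simp add: set_integral_add set_integral_diff set_integral_const less_top)
  finally show "0 \<le> (LINT x:A|M. (u x)^2) - 2 * l * (LINT x:A|M. u x) + l^2 * measure M A" .
qed simp

lemma set_integrable_of_square_nn_integral_finite:
  fixes u :: "'a \<Rightarrow> real"
  assumes [measurable]: "u \<in> borel_measurable M" "A \<in> sets M"
    and "emeasure M A < \<infinity>" and finite: "(\<integral>\<^sup>+x\<in>A. ennreal ((u x)^2) \<partial>M) < \<infinity>"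
  shows "set_integrable M A (\<lambda>x. (u x)^2)" "set_integrable M A u"
proof -
  have "(\<integral>\<^sup>+x. ennreal (indicator A x * (u x)^2) \<partial>M) = (\<integral>\<^sup>+x\<in>A. ennreal ((u x)^2) \<partial>M)"
    by (intro nn_integral_cong) (auto split: split_indicator)
  then show sq: "set_integrable M A (\<lambda>x. (u x)^2)"
    unfolding set_integrable_def using finite by (intro integrableI_nonneg) auto
  have "set_integrable M A (\<lambda>x. 1 :: real)"
    using assms(2,3) unfolding set_integrable_def by simp
  then have dominating: "set_integrable M A (\<lambda>x. 1 + (u x)^2)"
    using sq by (rule set_integral_add)
  have bound: "\<bar>v\<bar> \<le> \<bar>1 + v^2\<bar>" for v :: real
    using sum_power2_ge_zero[of "\<bar>v\<bar> - 1/2" 0] by (simp add: power2_eq_square algebra_simps)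
  show "set_integrable M A u"
  proof (rule set_integrable_bound[OF dominating])
    show "set_borel_measurable M A u"
      unfolding set_borel_measurable_def by measurable
    show "AE x in M. x \<in> A \<longrightarrow> norm (u x) \<le> norm (1 + (u x)^2)"
      using bound by (intro AE_I2) simp
  qed
qed

lemma set_nn_integral_eq_set_integral_nonneg:
  fixes f :: "'a \<Rightarrow> real"
  assumes "set_integrable M A f" "\<And>x. x \<in> A \<Longrightarrow> 0 \<le> f x"
  shows "(\<integral>\<^sup>+x\<in>A. ennreal (f x) \<partial>M) = ennreal (LINT x:A|M. f x)"
proof -
  have "(\<integral>\<^sup>+x\<in>A. ennreal (f x) \<partial>M) = (\<integral>\<^sup>+x. ennreal (indicator A x * f x) \<partial>M)"
    by (intro nn_integral_cong) (auto split: split_indicator)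
  also have "\<dots> = ennreal (LINT x:A|M. f x)"
    using assms unfolding set_integrable_def set_lebesgue_integral_def
    by (simp only: real_scaleR_def) (intro nn_integral_eq_integral, auto split: split_indicator)
  finally show ?thesis .
qed

lemma interval_avg_sq_dev_le:
  fixes g :: "real \<Rightarrow> real"
  assumes [measurable]: "g \<in> borel_measurable borel" and "0 < L"
  shows "ennreal (L * (interval_avg g c L - y)^2) \<le> (\<integral>\<^sup>+x\<in>{c..<c+L}. ennreal ((g x - y)^2) \<partial>lborel)"
proof (cases "(\<integral>\<^sup>+x\<in>{c..<c+L}. ennreal ((g x - y)^2) \<partial>lborel) < \<infinity>")
  case True
  let ?I = "{c..<c+L}" and ?u = "\<lambda>x. g x - y"
  have sq: "set_integrable lborel ?I (\<lambda>x. (?u x)^2)" and u: "set_integrable lborel ?I ?u"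
    using set_integrable_of_square_nn_integral_finite[of ?u lborel ?I] True \<open>0 < L\<close> by auto
  have "set_integrable lborel ?I (\<lambda>x. ?u x + y)"
    using u by (rule set_integral_add) (use \<open>0 < L\<close> in \<open>simp add: set_integrable_def\<close>)
  then have "set_integrable lborel ?I g"
    by simp
  then have "(LINT x:?I|lborel. ?u x) = (LINT x:?I|lborel. g x) - L * y"
    using \<open>0 < L\<close> by (simp add: set_integral_diff set_integral_const set_integrable_def)
  then have "interval_avg g c L - y = (LINT x:?I|lborel. ?u x) / L"
    using \<open>0 < L\<close> by (simp add: interval_avg_def field_simps)
  then have "L * (interval_avg g c L - y)^2 = (LINT x:?I|lborel. ?u x)^2 / L"
    using \<open>0 < L\<close> by (simp add: power2_eq_square)
  also have "\<dots> \<le> (LINT x:?I|lborel. (?u x)^2)"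
    using set_integral_square_le[OF u sq] \<open>0 < L\<close> by (simp add: divide_le_eq mult.commute)
  finally have "ennreal (L * (interval_avg g c L - y)^2) \<le> ennreal (LINT x:?I|lborel. (?u x)^2)"
    by (rule ennreal_leI)
  also have "\<dots> = (\<integral>\<^sup>+x\<in>?I. ennreal ((g x - y)^2) \<partial>lborel)"
    using sq by (simp add: set_nn_integral_eq_set_integral_nonneg)
  finally show ?thesis .
qed (simp add: top_unique not_less)

section \<open>The Gagliardo energy controls the dyadic increments\<close>

definition gagliardo_kernel :: "(real \<Rightarrow> real) \<Rightarrow> real \<Rightarrow> real \<Rightarrow> ennreal" where
  "gagliardo_kernel \<phi> s t = ennreal ((\<phi> s - \<phi> t)^2 / (s - t)^2)"

definition gagliardo_energy :: "(real \<Rightarrow> real) \<Rightarrow> real set \<Rightarrow> real set \<Rightarrow> ennreal" where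
  "gagliardo_energy \<phi> A B = (\<integral>\<^sup>+s\<in>A. (\<integral>\<^sup>+t\<in>B. gagliardo_kernel \<phi> s t \<partial>lborel) \<partial>lborel)"

lemma gagliardo_kernel_measurable [measurable]:
  assumes [measurable]: "\<phi> \<in> borel_measurable borel"
  shows "gagliardo_kernel \<phi> s \<in> borel_measurable borel"
  unfolding gagliardo_kernel_def by measurable

lemma gagliardo_kernel_inner_measurable [measurable]:
  assumes [measurable]: "\<phi> \<in> borel_measurable borel" "B \<in> sets borel"
  shows "(\<lambda>s. \<integral>\<^sup>+t\<in>B. gagliardo_kernel \<phi> s t \<partial>lborel) \<in> borel_measurable borel"
  unfolding gagliardo_kernel_def by measurable

lemma H12_sq_eq_gagliardo_energy:
  assumes [measurable]: "\<phi> \<in> borel_measurable borel"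
  shows "H12_sq \<phi> = ennreal (1 / (4 * pi^2)) * gagliardo_energy \<phi> UNIV UNIV"
proof -
  have inner: "(\<integral>\<^sup>+t. ennreal ((\<phi> s - \<phi> t)^2 / (s - t)^2) \<partial>lebesgue)
      = (\<integral>\<^sup>+t. gagliardo_kernel \<phi> s t \<partial>lborel)" for s
    unfolding gagliardo_kernel_def by (rule nn_integral_completion) measurable
  have outer: "(\<integral>\<^sup>+s. (\<integral>\<^sup>+t. gagliardo_kernel \<phi> s t \<partial>lborel) \<partial>lebesgue)
      = (\<integral>\<^sup>+s. (\<integral>\<^sup>+t. gagliardo_kernel \<phi> s t \<partial>lborel) \<partial>lborel)"
    by (rule nn_integral_completion) measurable
  show ?thesis
    unfolding H12_sq_def inner outer gagliardo_energy_def by simp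
qed

lemma gagliardo_energy_mono:
  assumes "A \<subseteq> A'" "B \<subseteq> B'"
  shows "gagliardo_energy \<phi> A B \<le> gagliardo_energy \<phi> A' B'"
  unfolding gagliardo_energy_def using assms
  by (intro nn_integral_mono) (auto split: split_indicator intro!: nn_set_integral_set_mono)

lemma gagliardo_energy_disjoint_Un:
  assumes [measurable]: "\<phi> \<in> borel_measurable borel" "A \<in> sets borel" "B \<in> sets borel"
    and "A \<inter> B = {}"
  shows "gagliardo_energy \<phi> A A + gagliardo_energy \<phi> B B + gagliardo_energy \<phi> A B
           \<le> gagliardo_energy \<phi> (A \<union> B) (A \<union> B)"
proof -
  let ?F = "\<lambda>C s. \<integral>\<^sup>+t\<in>C. gagliardo_kernel \<phi> s t \<partial>lborel"
  have F_Un: "?F (A \<union> B) s = ?F A s + ?F B s" for s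
    using assms by (intro nn_integral_disjoint_pair) auto
  have "gagliardo_energy \<phi> A A + gagliardo_energy \<phi> B B + gagliardo_energy \<phi> A B
      = (gagliardo_energy \<phi> A A + gagliardo_energy \<phi> A B) + gagliardo_energy \<phi> B B"
    by (simp only: ac_simps)
  also have "gagliardo_energy \<phi> A A + gagliardo_energy \<phi> A B = (\<integral>\<^sup>+s\<in>A. ?F (A \<union> B) s \<partial>lborel)"
    unfolding gagliardo_energy_def F_Un by (intro nn_set_integral_add[symmetric]) auto
  also have "gagliardo_energy \<phi> B B \<le> (\<integral>\<^sup>+s\<in>B. ?F (A \<union> B) s \<partial>lborel)"
    unfolding gagliardo_energy_def F_Un by (intro nn_integral_mono) (auto split: split_indicator)
  also have "(\<integral>\<^sup>+s\<in>A. ?F (A \<union> B) s \<partial>lborel) + (\<integral>\<^sup>+s\<in>B. ?F (A \<union> B) s \<partial>lborel)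
      = gagliardo_energy \<phi> (A \<union> B) (A \<union> B)"
    unfolding gagliardo_energy_def using assms by (intro nn_integral_disjoint_pair[symmetric]) auto
  finally show ?thesis
    by (simp add: add_left_mono)
qed

lemma nn_integral_sq_diff_le_gagliardo_kernel:
  assumes [measurable]: "\<phi> \<in> borel_measurable borel" "B \<in> sets borel"
    and near: "\<And>t. t \<in> B \<Longrightarrow> \<bar>s - t\<bar> \<le> D"
  shows "(\<integral>\<^sup>+t\<in>B. ennreal ((\<phi> t - \<phi> s)^2) \<partial>lborel)
           \<le> ennreal (D^2) * (\<integral>\<^sup>+t\<in>B. gagliardo_kernel \<phi> s t \<partial>lborel)"
proof -
  have "ennreal ((\<phi> t - \<phi> s)^2) \<le> ennreal (D^2) * gagliardo_kernel \<phi> s t" if "t \<in> B" for t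
  proof (cases "t = s")
    case False
    then have "0 < (s - t)^2" "(s - t)^2 \<le> D^2"
      using near[OF that] by (auto simp: abs_le_square_iff[symmetric])
    then have "(\<phi> t - \<phi> s)^2 = (s - t)^2 * ((\<phi> s - \<phi> t)^2 / (s - t)^2)"
      by (simp add: power2_commute)
    also have "\<dots> \<le> D^2 * ((\<phi> s - \<phi> t)^2 / (s - t)^2)"
      using \<open>(s - t)^2 \<le> D^2\<close> by (intro mult_right_mono) auto
    finally have "(\<phi> t - \<phi> s)^2 \<le> D^2 * ((\<phi> s - \<phi> t)^2 / (s - t)^2)" .
    then show ?thesis
      unfolding gagliardo_kernel_def by (simp add: ennreal_mult[symmetric] ennreal_leI)
  qed simp
  then have "(\<integral>\<^sup>+t\<in>B. ennreal ((\<phi> t - \<phi> s)^2) \<partial>lborel)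
      \<le> (\<integral>\<^sup>+t. ennreal (D^2) * (gagliardo_kernel \<phi> s t * indicator B t) \<partial>lborel)"
    by (intro nn_integral_mono) (auto split: split_indicator)
  also have "\<dots> = ennreal (D^2) * (\<integral>\<^sup>+t\<in>B. gagliardo_kernel \<phi> s t \<partial>lborel)"
    by (rule nn_integral_cmult) measurable
  finally show ?thesis .
qed

lemma half_avg_diff_sq_le_gagliardo_energy:
  fixes \<phi> :: "real \<Rightarrow> real"
  assumes [measurable]: "\<phi> \<in> borel_measurable borel" and "0 < L"
  shows "ennreal (((interval_avg \<phi> c (L/2) - interval_avg \<phi> (c + L/2) (L/2)) / 2)^2)
           \<le> gagliardo_energy \<phi> {c..<c+L/2} {c+L/2..<c+L}"
proof -
  let ?ml = "interval_avg \<phi> c (L/2)" and ?mr = "interval_avg \<phi> (c + L/2) (L/2)"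
  let ?F = "\<lambda>s. \<integral>\<^sup>+t\<in>{c+L/2..<c+L}. gagliardo_kernel \<phi> s t \<partial>lborel"
  have e: "c + L/2 + L/2 = c + L" by simp
  have inner: "ennreal (L/2 * (\<phi> s - ?mr)^2) \<le> ennreal (L^2) * ?F s" if "s \<in> {c..<c+L/2}" for s
  proof -
    have "ennreal (L/2 * (\<phi> s - ?mr)^2) \<le> (\<integral>\<^sup>+t\<in>{c+L/2..<c+L}. ennreal ((\<phi> t - \<phi> s)^2) \<partial>lborel)"
      using interval_avg_sq_dev_le[of \<phi> "L/2" "c + L/2" "\<phi> s"] \<open>0 < L\<close>
      by (simp add: e power2_commute)
    also have "\<dots> \<le> ennreal (L^2) * ?F s"
      using that by (intro nn_integral_sq_diff_le_gagliardo_kernel) auto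
    finally show ?thesis .
  qed
  have "ennreal (L^2) * ennreal (((?ml - ?mr) / 2)^2) = ennreal (L^2 * ((?ml - ?mr) / 2)^2)"
    by (rule ennreal_mult[symmetric]) auto
  also have "L^2 * ((?ml - ?mr) / 2)^2 = L/2 * (L/2 * (?ml - ?mr)^2)"
    by (simp add: power2_eq_square)
  also have "ennreal (L/2 * (L/2 * (?ml - ?mr)^2)) = ennreal (L/2) * ennreal (L/2 * (?ml - ?mr)^2)"
    using \<open>0 < L\<close> by (intro ennreal_mult) auto
  also have "\<dots> \<le> ennreal (L/2) * (\<integral>\<^sup>+s\<in>{c..<c+L/2}. ennreal ((\<phi> s - ?mr)^2) \<partial>lborel)"
    using interval_avg_sq_dev_le[of \<phi> "L/2" c ?mr] \<open>0 < L\<close> by (intro mult_left_mono) auto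
  also have "\<dots> = (\<integral>\<^sup>+s\<in>{c..<c+L/2}. ennreal (L/2 * (\<phi> s - ?mr)^2) \<partial>lborel)"
    using \<open>0 < L\<close> by (subst nn_integral_cmult[symmetric])
      (auto intro!: nn_integral_cong split: split_indicator simp: ennreal_mult[symmetric])
  also have "\<dots> \<le> (\<integral>\<^sup>+s\<in>{c..<c+L/2}. ennreal (L^2) * ?F s \<partial>lborel)"
    using inner by (intro nn_integral_mono) (auto split: split_indicator)
  also have "\<dots> = ennreal (L^2) * gagliardo_energy \<phi> {c..<c+L/2} {c+L/2..<c+L}"
    unfolding gagliardo_energy_def by (subst nn_integral_cmult[symmetric]) (auto simp: mult.assoc)
  finally have "ennreal (L^2) * ennreal (((?ml - ?mr) / 2)^2)
      \<le> ennreal (L^2) * gagliardo_energy \<phi> {c..<c+L/2} {c+L/2..<c+L}" .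
  then show ?thesis
    using \<open>0 < L\<close> by (simp add: ennreal_mult_le_mult_iff)
qed

lemma dyadic_sq_increments_le_gagliardo_energy:
  fixes \<phi> :: "real \<Rightarrow> real"
  assumes [measurable]: "\<phi> \<in> borel_measurable borel" and "0 < L"
  shows "ennreal (dyadic_sq_increments \<phi> n c L) \<le> gagliardo_energy \<phi> {c..<c+L} {c..<c+L}"
  using \<open>0 < L\<close>
proof (induction n arbitrary: c L)
  case (Suc n)
  let ?l = "{c..<c+L/2}" and ?r = "{c+L/2..<c+L}"
  have "ennreal (dyadic_sq_increments \<phi> (Suc n) c L)
      = ennreal (((interval_avg \<phi> c (L/2) - interval_avg \<phi> (c + L/2) (L/2)) / 2)^2)
        + ennreal (dyadic_sq_increments \<phi> n c (L/2)) + ennreal (dyadic_sq_increments \<phi> n (c + L/2) (L/2))"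
    using dyadic_sq_increments_nonneg by (simp add: ennreal_plus[symmetric] del: ennreal_plus)
  also have "\<dots> \<le> gagliardo_energy \<phi> ?l ?r + gagliardo_energy \<phi> ?l ?l + gagliardo_energy \<phi> ?r ?r"
    using Suc.IH[of "L/2" c] Suc.IH[of "L/2" "c + L/2"] Suc.prems
    by (intro add_mono half_avg_diff_sq_le_gagliardo_energy) (auto simp: add.assoc)
  also have "\<dots> \<le> gagliardo_energy \<phi> (?l \<union> ?r) (?l \<union> ?r)"
    using gagliardo_energy_disjoint_Un[of \<phi> ?l ?r] by (auto simp: ac_simps)
  also have "?l \<union> ?r = {c..<c+L}"
    using Suc.prems by auto
  finally show ?case .
qed simp

section \<open>Convergence of the dyadic averages\<close>

lemma set_nn_integral_abs_finite:
  fixes f :: "'a \<Rightarrow> real"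
  assumes "set_integrable M A f"
  shows "(\<integral>\<^sup>+x\<in>A. ennreal \<bar>f x\<bar> \<partial>M) < \<infinity>"
proof -
  have "(\<integral>\<^sup>+x. ennreal (norm (indicator A x *\<^sub>R f x)) \<partial>M) < \<infinity>"
    using assms unfolding set_integrable_def integrable_iff_bounded by blast
  moreover have "(\<integral>\<^sup>+x. ennreal (norm (indicator A x *\<^sub>R f x)) \<partial>M) = (\<integral>\<^sup>+x\<in>A. ennreal \<bar>f x\<bar> \<partial>M)"
    by (intro nn_integral_cong) (auto split: split_indicator)
  ultimately show ?thesis by simp
qed

lemma interval_avg_diff:
  assumes "set_integrable lborel {c..<c+L} f" "set_integrable lborel {c..<c+L} g"
  shows "interval_avg (\<lambda>x. f x - g x) c L = interval_avg f c L - interval_avg g c L"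
  using assms by (simp add: interval_avg_def set_integral_diff diff_divide_distrib)

lemma dyadic_avg_diff:
  assumes "\<And>a b. set_integrable lborel {a..<b} f" "\<And>a b. set_integrable lborel {a..<b} g"
  shows "dyadic_avg (\<lambda>x. f x - g x) n c L x = dyadic_avg f n c L x - dyadic_avg g n c L x"
  by (induction n arbitrary: c L) (auto simp: interval_avg_diff assms)

lemma dyadic_avg_L1_contraction:
  assumes int: "\<And>a b. set_integrable lborel {a..<b} f" and [measurable]: "f \<in> borel_measurable borel"
    and "0 < L"
  shows "(\<integral>\<^sup>+x\<in>{c..<c+L}. ennreal \<bar>dyadic_avg f n c L x\<bar> \<partial>lborel)
           \<le> (\<integral>\<^sup>+x\<in>{c..<c+L}. ennreal \<bar>f x\<bar> \<partial>lborel)"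
  using \<open>0 < L\<close>
proof (induction n arbitrary: c L)
  case 0
  have "(\<integral>\<^sup>+x\<in>{c..<c+L}. ennreal \<bar>dyadic_avg f 0 c L x\<bar> \<partial>lborel)
      = ennreal \<bar>interval_avg f c L\<bar> * emeasure lborel {c..<c+L}"
    by (simp add: nn_integral_cmult_indicator[symmetric] mult.commute)
  also have "\<dots> = ennreal \<bar>LINT x:{c..<c+L}|lborel. f x\<bar>"
    using "0" by (simp add: interval_avg_def ennreal_mult[symmetric] abs_div)
  also have "\<dots> \<le> (\<integral>\<^sup>+x. norm (indicator {c..<c+L} x *\<^sub>R f x) \<partial>lborel)"
    using int[of c "c+L"] integral_norm_bound_ennreal[of lborel "\<lambda>x. indicator {c..<c+L} x *\<^sub>R f x"]
    by (simp add: set_integrable_def set_lebesgue_integral_def)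
  also have "\<dots> = (\<integral>\<^sup>+x\<in>{c..<c+L}. ennreal \<bar>f x\<bar> \<partial>lborel)"
    by (intro nn_integral_cong) (auto split: split_indicator)
  finally show ?case .
next
  case (Suc n)
  have e: "c + L/2 + L/2 = c + L" by simp
  have "(\<integral>\<^sup>+x\<in>{c..<c+L}. ennreal \<bar>dyadic_avg f (Suc n) c L x\<bar> \<partial>lborel)
      = (\<integral>\<^sup>+x\<in>{c..<c+L/2}. ennreal \<bar>dyadic_avg f n c (L/2) x\<bar> \<partial>lborel)
        + (\<integral>\<^sup>+x\<in>{c+L/2..<c+L/2+L/2}. ennreal \<bar>dyadic_avg f n (c + L/2) (L/2) x\<bar> \<partial>lborel)"
    using Suc.prems
    by (subst nn_integral_Ico_halves) (auto simp: e intro!: arg_cong2[where f="(+)"] set_nn_integral_cong)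
  also have "\<dots> \<le> (\<integral>\<^sup>+x\<in>{c..<c+L/2}. ennreal \<bar>f x\<bar> \<partial>lborel)
      + (\<integral>\<^sup>+x\<in>{c+L/2..<c+L/2+L/2}. ennreal \<bar>f x\<bar> \<partial>lborel)"
    using Suc.prems by (intro add_mono Suc.IH) auto
  also have "\<dots> = (\<integral>\<^sup>+x\<in>{c..<c+L}. ennreal \<bar>f x\<bar> \<partial>lborel)"
    unfolding e using Suc.prems by (intro nn_integral_Ico_halves[symmetric]) measurable
  finally show ?case .
qed

lemma dyadic_avg_eq_interval_avg:
  assumes "x \<in> {c..<c+L}" "0 < L"
  obtains c' where "c \<le> c'" "c' \<le> x" "x < c' + L / 2^n" "c' + L / 2^n \<le> c + L"
    "dyadic_avg f n c L x = interval_avg f c' (L / 2^n)"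
proof -
  have "\<exists>c'. c \<le> c' \<and> c' \<le> x \<and> x < c' + L / 2^n \<and> c' + L / 2^n \<le> c + L
          \<and> dyadic_avg f n c L x = interval_avg f c' (L / 2^n)"
    using assms
  proof (induction n arbitrary: c L)
    case (Suc n)
    have half: "(L/2) / 2^n = L / 2^Suc n" by simp
    show ?case
    proof (cases "x < c + L/2")
      case True
      then obtain c' where "c \<le> c' \<and> c' \<le> x \<and> x < c' + (L/2)/2^n \<and> c' + (L/2)/2^n \<le> c + L/2
          \<and> dyadic_avg f n c (L/2) x = interval_avg f c' ((L/2)/2^n)"
        using Suc.IH[of c "L/2"] Suc.prems by auto
      then show ?thesis
        using True Suc.prems unfolding half by (intro exI[of _ c']) auto
    next
      case False
      then obtain c' where "c + L/2 \<le> c' \<and> c' \<le> x \<and> x < c' + (L/2)/2^n \<and> c' + (L/2)/2^n \<le> c + L/2 + L/2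
          \<and> dyadic_avg f n (c + L/2) (L/2) x = interval_avg f c' ((L/2)/2^n)"
        using Suc.IH[of "c + L/2" "L/2"] Suc.prems by auto
      then show ?thesis
        using False Suc.prems unfolding half by (intro exI[of _ c']) auto
    qed
  qed auto
  then show ?thesis using that by blast
qed

lemma interval_avg_close:
  assumes "0 < l" "set_integrable lborel {c..<c+l} g"
    and close: "\<And>y. y \<in> {c..<c+l} \<Longrightarrow> \<bar>g y - v\<bar> \<le> e"
  shows "\<bar>interval_avg g c l - v\<bar> \<le> e"
proof -
  have const_int: "set_integrable lborel {c..<c+l} (\<lambda>_. k)" for k :: real
    using \<open>0 < l\<close> unfolding set_integrable_def by simp
  have const: "(LINT y:{c..<c+l}|lborel. k) = l * k" for k :: real
    using \<open>0 < l\<close> by (simp add: set_integral_const)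
  have "g y \<le> v + e" "v - e \<le> g y" if "y \<in> {c..<c+l}" for y
    using close[OF that] by auto
  then have "(LINT y:{c..<c+l}|lborel. g y) \<le> (LINT y:{c..<c+l}|lborel. v + e)"
    "(LINT y:{c..<c+l}|lborel. v - e) \<le> (LINT y:{c..<c+l}|lborel. g y)"
    by (intro set_integral_mono assms(2) const_int; simp)+
  then show ?thesis
    using \<open>0 < l\<close> unfolding interval_avg_def const by (auto simp: abs_le_iff field_simps)
qed

lemma dyadic_avg_uniform_convergence:
  assumes g: "continuous_on UNIV g" and "0 < L" "0 < e"
  shows "\<exists>N. \<forall>n\<ge>N. \<forall>x\<in>{c..<c+L}. \<bar>dyadic_avg g n c L x - g x\<bar> \<le> e"
proof -
  have "uniformly_continuous_on {c..c+L} g"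
    by (intro compact_uniformly_continuous continuous_on_subset[OF g]) auto
  then obtain d where "0 < d"
    and d: "\<And>x y. x \<in> {c..c+L} \<Longrightarrow> y \<in> {c..c+L} \<Longrightarrow> dist y x < d \<Longrightarrow> dist (g y) (g x) < e"
    using \<open>0 < e\<close> unfolding uniformly_continuous_on_def by metis
  obtain N where "L / d < 2^N"
    using real_arch_pow[of 2 "L/d"] by auto
  then have N: "L / 2^N < d"
    using \<open>0 < d\<close> by (simp add: field_simps)
  have "\<bar>dyadic_avg g n c L x - g x\<bar> \<le> e" if "N \<le> n" "x \<in> {c..<c+L}" for n x
  proof -
    obtain c' where c': "c \<le> c'" "c' \<le> x" "x < c' + L/2^n" "c' + L/2^n \<le> c + L"
      and avg: "dyadic_avg g n c L x = interval_avg g c' (L/2^n)"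
      using dyadic_avg_eq_interval_avg[OF \<open>x \<in> {c..<c+L}\<close> \<open>0 < L\<close>] by metis
    have "L/2^n \<le> L/2^N"
      using \<open>N \<le> n\<close> \<open>0 < L\<close> by (intro divide_left_mono) auto
    have "set_integrable lborel {c'..c'+L/2^n} g"
      by (intro borel_integrable_atLeastAtMost' continuous_on_subset[OF g]) auto
    then have "set_integrable lborel {c'..<c'+L/2^n} g"
      by (rule set_integrable_subset) auto
    then have "\<bar>interval_avg g c' (L/2^n) - g x\<bar> \<le> e"
    proof (rule interval_avg_close[rotated])
      fix y assume "y \<in> {c'..<c'+L/2^n}"
      then have "dist (g y) (g x) < e"
        using c' \<open>x \<in> {c..<c+L}\<close> \<open>L/2^n \<le> L/2^N\<close> N by (intro d) (auto simp: dist_real_def)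
      then show "\<bar>g y - g x\<bar> \<le> e" by (simp add: dist_real_def)
    qed (use \<open>0 < L\<close> in simp)
    then show ?thesis using avg by simp
  qed
  then show ?thesis by blast
qed

lemma truncation_L1_approx:
  fixes f :: "'a \<Rightarrow> real"
  assumes [measurable]: "f \<in> borel_measurable M" "A \<in> sets M" and "set_integrable M A f" "0 < e"
  obtains K :: real where
    "(\<integral>\<^sup>+x\<in>A. ennreal \<bar>f x - max (- K) (min K (f x))\<bar> \<partial>M) \<le> ennreal e"
proof -
  let ?I = "indicator A :: 'a \<Rightarrow> real"
  have "(\<integral>\<^sup>+x. ennreal (?I x * \<bar>f x\<bar>) \<partial>M) = (\<integral>\<^sup>+x\<in>A. ennreal \<bar>f x\<bar> \<partial>M)"
    by (intro nn_integral_cong) (auto split: split_indicator)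
  then have finite: "(\<integral>\<^sup>+x. ennreal (?I x * \<bar>f x\<bar>) \<partial>M) < \<infinity>"
    using set_nn_integral_abs_finite[OF assms(3)] by simp
  have "(\<lambda>i. \<integral>\<^sup>+x. norm (?I x * f x - ?I x * max (- real i) (min (real i) (f x))) \<partial>M) \<longlonglongrightarrow> 0"
  proof (rule nn_integral_dominated_convergence_norm[where w="\<lambda>x. ?I x * \<bar>f x\<bar>"])
    show "AE x in M. norm (?I x * max (- real j) (min (real j) (f x))) \<le> ?I x * \<bar>f x\<bar>" for j
      by (intro AE_I2) (auto split: split_indicator)
    have "(\<lambda>i. max (- real i) (min (real i) y)) \<longlonglongrightarrow> y" for y :: real
    proof (rule tendsto_eventually)
      obtain N :: nat where "\<bar>y\<bar> \<le> real N"
        using real_arch_simple by blast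
      then show "\<forall>\<^sub>F i in sequentially. max (- real i) (min (real i) y) = y"
        unfolding eventually_sequentially by (intro exI[of _ N]) auto
    qed
    then show "AE x in M. (\<lambda>i. ?I x * max (- real i) (min (real i) (f x))) \<longlonglongrightarrow> ?I x * f x"
      by (intro AE_I2 tendsto_mult tendsto_const)
  qed (use finite in auto)
  then have "\<forall>\<^sub>F i in sequentially.
      (\<integral>\<^sup>+x. norm (?I x * f x - ?I x * max (- real i) (min (real i) (f x))) \<partial>M) < ennreal e"
    using \<open>0 < e\<close> by (intro order_tendstoD(2)) auto
  then obtain i where
    "(\<integral>\<^sup>+x. norm (?I x * f x - ?I x * max (- real i) (min (real i) (f x))) \<partial>M) < ennreal e"
    by (auto simp: eventually_sequentially)
  moreover have "(\<integral>\<^sup>+x. norm (?I x * f x - ?I x * max (- real i) (min (real i) (f x))) \<partial>M)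
      = (\<integral>\<^sup>+x\<in>A. ennreal \<bar>f x - max (- real i) (min (real i) (f x))\<bar> \<partial>M)"
    by (intro nn_integral_cong) (auto split: split_indicator)
  ultimately show ?thesis
    using that[of "real i"] by simp
qed

lemma bounded_L1_approx_by_continuous:
  fixes f :: "real \<Rightarrow> real"
  assumes [measurable]: "f \<in> borel_measurable borel" and bounded: "\<And>x. \<bar>f x\<bar> \<le> K" and "0 < e"
  obtains g where "continuous_on UNIV g" "(\<integral>\<^sup>+x\<in>{a..<b}. ennreal \<bar>f x - g x\<bar> \<partial>lborel) \<le> ennreal e"
proof -
  let ?I = "indicator {a..<b} :: real \<Rightarrow> real"
  let ?T = "\<lambda>y. max (- K) (min K y)"
  have "f measurable_on UNIV"
    by (intro lebesgue_measurable_imp_measurable_on measurable_completion) auto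
  then obtain N g where "negligible N" and cont: "\<And>n. continuous_on UNIV (g n)"
    and lim: "\<And>x. x \<notin> N \<Longrightarrow> (\<lambda>n. g n x) \<longlonglongrightarrow> f x"
    unfolding measurable_on_def by auto
  have [measurable]: "g n \<in> borel_measurable borel" for n
    using cont by (rule borel_measurable_continuous_onI)
  have "AE x in lborel. x \<notin> N"
    using AE_not_in[of N lebesgue] \<open>negligible N\<close>
    by (simp add: negligible_iff_null_sets AE_completion_iff)
  then have conv: "AE x in lborel. (\<lambda>i. ?I x * ?T (g i x)) \<longlonglongrightarrow> ?I x * f x"
  proof (rule AE_mp, intro AE_I2 impI)
    fix x assume "x \<notin> N"
    then have "(\<lambda>n. ?T (g n x)) \<longlonglongrightarrow> ?T (f x)"
      by (intro tendsto_intros lim)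
    moreover have "?T (f x) = f x"
      using bounded[of x] by auto
    ultimately show "(\<lambda>i. ?I x * ?T (g i x)) \<longlonglongrightarrow> ?I x * f x"
      by (intro tendsto_mult tendsto_const) simp
  qed
  have "(\<lambda>i. \<integral>\<^sup>+x. norm (?I x * f x - ?I x * ?T (g i x)) \<partial>lborel) \<longlonglongrightarrow> 0"
  proof (rule nn_integral_dominated_convergence_norm[where w="\<lambda>x. ?I x * \<bar>K\<bar>"])
    show "AE x in lborel. norm (?I x * ?T (g j x)) \<le> ?I x * \<bar>K\<bar>" for j
      by (intro AE_I2) (auto split: split_indicator)
    have "(\<integral>\<^sup>+x. ennreal (?I x * \<bar>K\<bar>) \<partial>lborel) = ennreal \<bar>K\<bar> * emeasure lborel {a..<b}"
      by (subst nn_integral_cmult_indicator[symmetric]) (auto intro!: nn_integral_cong split: split_indicator)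
    then show "(\<integral>\<^sup>+x. ennreal (?I x * \<bar>K\<bar>) \<partial>lborel) < \<infinity>"
      by (cases "a \<le> b") (auto simp: ennreal_mult_less_top)
  qed (use conv in auto)
  then have "\<forall>\<^sub>F i in sequentially. (\<integral>\<^sup>+x. norm (?I x * f x - ?I x * ?T (g i x)) \<partial>lborel) < ennreal e"
    using \<open>0 < e\<close> by (intro order_tendstoD(2)) auto
  then obtain i where i: "(\<integral>\<^sup>+x. norm (?I x * f x - ?I x * ?T (g i x)) \<partial>lborel) < ennreal e"
    by (auto simp: eventually_sequentially)
  show ?thesis
  proof (rule that)
    show "continuous_on UNIV (\<lambda>x. ?T (g i x))"
      by (intro continuous_intros cont)
    have "(\<integral>\<^sup>+x\<in>{a..<b}. ennreal \<bar>f x - ?T (g i x)\<bar> \<partial>lborel)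
        = (\<integral>\<^sup>+x. norm (?I x * f x - ?I x * ?T (g i x)) \<partial>lborel)"
      by (intro nn_integral_cong) (auto split: split_indicator)
    then show "(\<integral>\<^sup>+x\<in>{a..<b}. ennreal \<bar>f x - ?T (g i x)\<bar> \<partial>lborel) \<le> ennreal e"
      using i by simp
  qed
qed

lemma L1_approx_by_continuous:
  fixes f :: "real \<Rightarrow> real"
  assumes [measurable]: "f \<in> borel_measurable borel" and "set_integrable lborel {a..<b} f" "0 < e"
  obtains g where "continuous_on UNIV g" "(\<integral>\<^sup>+x\<in>{a..<b}. ennreal \<bar>f x - g x\<bar> \<partial>lborel) \<le> ennreal e"
proof -
  obtain K where K: "(\<integral>\<^sup>+x\<in>{a..<b}. ennreal \<bar>f x - max (- K) (min K (f x))\<bar> \<partial>lborel) \<le> ennreal (e/2)"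
    by (rule truncation_L1_approx[of f lborel "{a..<b}" "e/2"]) (use assms in auto)
  have bounded: "\<bar>max (- K) (min K (f x))\<bar> \<le> \<bar>K\<bar>" for x
    by auto
  obtain g where "continuous_on UNIV g"
    and g: "(\<integral>\<^sup>+x\<in>{a..<b}. ennreal \<bar>max (- K) (min K (f x)) - g x\<bar> \<partial>lborel) \<le> ennreal (e/2)"
    by (rule bounded_L1_approx_by_continuous[of "\<lambda>x. max (- K) (min K (f x))" "\<bar>K\<bar>" "e/2"])
      (use bounded \<open>0 < e\<close> in auto)
  have [measurable]: "g \<in> borel_measurable borel"
    using \<open>continuous_on UNIV g\<close> by (rule borel_measurable_continuous_onI)
  have "(\<integral>\<^sup>+x\<in>{a..<b}. ennreal \<bar>f x - g x\<bar> \<partial>lborel)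
      \<le> (\<integral>\<^sup>+x\<in>{a..<b}. (ennreal \<bar>f x - max (- K) (min K (f x))\<bar>
                           + ennreal \<bar>max (- K) (min K (f x)) - g x\<bar>) \<partial>lborel)"
    by (intro nn_integral_mono)
      (auto split: split_indicator simp: ennreal_plus[symmetric] simp del: ennreal_plus intro!: ennreal_leI)
  also have "\<dots> \<le> ennreal (e/2) + ennreal (e/2)"
    using K g by (subst nn_set_integral_add) (auto intro: add_mono)
  also have "\<dots> = ennreal e"
    using \<open>0 < e\<close> by (simp add: ennreal_plus[symmetric] del: ennreal_plus)
  finally show ?thesis
    using that \<open>continuous_on UNIV g\<close> by blast
qed

lemma tendsto_ennreal_0I:
  fixes X :: "nat \<Rightarrow> ennreal"
  assumes "\<And>e. 0 < e \<Longrightarrow> \<forall>\<^sub>F n in sequentially. X n \<le> ennreal e"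
  shows "X \<longlonglongrightarrow> 0"
proof (rule order_tendstoI)
  fix a :: ennreal assume "0 < a"
  then obtain b where "0 < b" "b < a"
    using dense by blast
  then have "b \<noteq> top"
    using top_greatest[of a] by (metis order.strict_trans1 order.strict_implies_not_eq)
  then obtain e where "b = ennreal e" "0 < e"
    using \<open>0 < b\<close> by (cases b) auto
  then show "\<forall>\<^sub>F n in sequentially. X n < a"
    using assms[of e] \<open>b < a\<close> by (auto elim: eventually_mono)
qed simp

lemma dyadic_avg_L1_error_le:
  fixes f g :: "real \<Rightarrow> real"
  assumes [measurable]: "f \<in> borel_measurable borel" and int: "\<And>a b. set_integrable lborel {a..<b} f"
    and g: "continuous_on UNIV g" and "0 < L" "0 \<le> \<delta>"
    and close: "\<And>x. x \<in> {c..<c+L} \<Longrightarrow> \<bar>dyadic_avg g n c L x - g x\<bar> \<le> \<delta>"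
  shows "(\<integral>\<^sup>+x\<in>{c..<c+L}. ennreal \<bar>dyadic_avg f n c L x - f x\<bar> \<partial>lborel)
           \<le> (\<integral>\<^sup>+x\<in>{c..<c+L}. ennreal \<bar>f x - g x\<bar> \<partial>lborel)
             + (\<integral>\<^sup>+x\<in>{c..<c+L}. ennreal \<bar>f x - g x\<bar> \<partial>lborel) + ennreal (\<delta> * L)"
proof -
  have [measurable]: "g \<in> borel_measurable borel"
    using g by (rule borel_measurable_continuous_onI)
  have g_int: "set_integrable lborel {a..<b} g" for a b
  proof -
    have "set_integrable lborel {a..b} g"
      by (intro borel_integrable_atLeastAtMost' continuous_on_subset[OF g]) auto
    then show ?thesis by (rule set_integrable_subset) auto
  qed
  have diff_int: "set_integrable lborel {a..<b} (\<lambda>x. f x - g x)" for a b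
    using int g_int by (rule set_integral_diff)
  have "(\<integral>\<^sup>+x\<in>{c..<c+L}. ennreal \<bar>dyadic_avg f n c L x - f x\<bar> \<partial>lborel)
      \<le> (\<integral>\<^sup>+x\<in>{c..<c+L}. ennreal \<bar>dyadic_avg (\<lambda>x. f x - g x) n c L x\<bar>
           + ennreal \<delta> + ennreal \<bar>f x - g x\<bar> \<partial>lborel)"
  proof (intro nn_integral_mono)
    fix x
    have "\<bar>dyadic_avg f n c L x - f x\<bar> \<le> \<bar>dyadic_avg (\<lambda>x. f x - g x) n c L x\<bar> + \<delta> + \<bar>f x - g x\<bar>"
      if "x \<in> {c..<c+L}"
      using close[OF that] unfolding dyadic_avg_diff[OF int g_int] by linarith
    then show "ennreal \<bar>dyadic_avg f n c L x - f x\<bar> * indicator {c..<c+L} x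
        \<le> (ennreal \<bar>dyadic_avg (\<lambda>x. f x - g x) n c L x\<bar> + ennreal \<delta> + ennreal \<bar>f x - g x\<bar>)
           * indicator {c..<c+L} x"
      using \<open>0 \<le> \<delta>\<close> by (auto split: split_indicator simp: ennreal_plus[symmetric] simp del: ennreal_plus)
  qed
  also have "\<dots> = (\<integral>\<^sup>+x\<in>{c..<c+L}. ennreal \<bar>dyadic_avg (\<lambda>x. f x - g x) n c L x\<bar> \<partial>lborel)
      + ennreal \<delta> * emeasure lborel {c..<c+L} + (\<integral>\<^sup>+x\<in>{c..<c+L}. ennreal \<bar>f x - g x\<bar> \<partial>lborel)"
    by (simp add: nn_set_integral_add nn_integral_cmult_indicator)
  also have "\<dots> \<le> (\<integral>\<^sup>+x\<in>{c..<c+L}. ennreal \<bar>f x - g x\<bar> \<partial>lborel) + ennreal (\<delta> * L)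
      + (\<integral>\<^sup>+x\<in>{c..<c+L}. ennreal \<bar>f x - g x\<bar> \<partial>lborel)"
    using dyadic_avg_L1_contraction[OF diff_int _ \<open>0 < L\<close>, of n c] \<open>0 < L\<close> \<open>0 \<le> \<delta>\<close>
    by (intro add_mono) (auto simp: ennreal_mult)
  finally show ?thesis
    by (simp add: ac_simps)
qed

lemma dyadic_avg_L1_convergence:
  fixes f :: "real \<Rightarrow> real"
  assumes [measurable]: "f \<in> borel_measurable borel" and int: "\<And>a b. set_integrable lborel {a..<b} f"
    and "0 < L"
  shows "(\<lambda>n. \<integral>\<^sup>+x\<in>{c..<c+L}. ennreal \<bar>dyadic_avg f n c L x - f x\<bar> \<partial>lborel) \<longlonglongrightarrow> 0"
proof (rule tendsto_ennreal_0I)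
  fix e :: real assume "0 < e"
  obtain g where g: "continuous_on UNIV g"
    and fg: "(\<integral>\<^sup>+x\<in>{c..<c+L}. ennreal \<bar>f x - g x\<bar> \<partial>lborel) \<le> ennreal (e/3)"
    by (rule L1_approx_by_continuous[of f c "c+L" "e/3"]) (use int \<open>0 < e\<close> in auto)
  obtain N where N: "\<forall>n\<ge>N. \<forall>x\<in>{c..<c+L}. \<bar>dyadic_avg g n c L x - g x\<bar> \<le> e / (3 * L)"
    using dyadic_avg_uniform_convergence[OF g \<open>0 < L\<close>, of "e / (3 * L)" c] \<open>0 < e\<close> \<open>0 < L\<close> by auto
  have "(\<integral>\<^sup>+x\<in>{c..<c+L}. ennreal \<bar>dyadic_avg f n c L x - f x\<bar> \<partial>lborel) \<le> ennreal e" if "N \<le> n" for n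
  proof -
    let ?X = "\<integral>\<^sup>+x\<in>{c..<c+L}. ennreal \<bar>f x - g x\<bar> \<partial>lborel"
    have "(\<integral>\<^sup>+x\<in>{c..<c+L}. ennreal \<bar>dyadic_avg f n c L x - f x\<bar> \<partial>lborel)
        \<le> ?X + ?X + ennreal (e / (3 * L) * L)"
      by (rule dyadic_avg_L1_error_le[OF _ int g \<open>0 < L\<close> _ N[rule_format, OF that]])
        (use \<open>0 < e\<close> \<open>0 < L\<close> in auto)
    also have "e / (3 * L) * L = e / 3"
      using \<open>0 < L\<close> by simp
    also have "?X + ?X + ennreal (e/3) \<le> ennreal (e/3) + ennreal (e/3) + ennreal (e/3)"
      using fg by (intro add_mono) auto
    also have "\<dots> = ennreal e"
      using \<open>0 < e\<close> by (simp add: ennreal_plus[symmetric] del: ennreal_plus)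
    finally show ?thesis .
  qed
  then show "\<forall>\<^sub>F n in sequentially. (\<integral>\<^sup>+x\<in>{c..<c+L}. ennreal \<bar>dyadic_avg f n c L x - f x\<bar> \<partial>lborel) \<le> ennreal e"
    unfolding eventually_sequentially by blast
qed

lemma dyadic_avg_AE_convergent_subseq:
  fixes f :: "real \<Rightarrow> real"
  assumes [measurable]: "f \<in> borel_measurable borel" and int: "\<And>a b. set_integrable lborel {a..<b} f"
    and "0 < L"
  obtains r :: "nat \<Rightarrow> nat" where "strict_mono r"
    "AE x in lborel. x \<in> {c..<c+L} \<longrightarrow> (\<lambda>n. dyadic_avg f (r n) c L x) \<longlonglongrightarrow> f x"
proof -
  let ?u = "\<lambda>n x. indicator {c..<c+L} x * (dyadic_avg f n c L x - f x)"
  have u: "(\<integral>\<^sup>+x. ennreal \<bar>?u n x\<bar> \<partial>lborel)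
      = (\<integral>\<^sup>+x\<in>{c..<c+L}. ennreal \<bar>dyadic_avg f n c L x - f x\<bar> \<partial>lborel)" for n
    by (intro nn_integral_cong) (auto split: split_indicator)
  have "(\<integral>\<^sup>+x\<in>{c..<c+L}. ennreal \<bar>dyadic_avg f n c L x - f x\<bar> \<partial>lborel)
      \<le> (\<integral>\<^sup>+x\<in>{c..<c+L}. ennreal \<bar>dyadic_avg f n c L x\<bar> + ennreal \<bar>f x\<bar> \<partial>lborel)" for n
    by (intro nn_integral_mono)
      (auto split: split_indicator simp: ennreal_plus[symmetric] simp del: ennreal_plus intro!: ennreal_leI)
  also have "\<dots> n \<le> (\<integral>\<^sup>+x\<in>{c..<c+L}. ennreal \<bar>f x\<bar> \<partial>lborel) + (\<integral>\<^sup>+x\<in>{c..<c+L}. ennreal \<bar>f x\<bar> \<partial>lborel)"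
    for n
    using dyadic_avg_L1_contraction[OF int _ \<open>0 < L\<close>] by (simp add: nn_set_integral_add add_right_mono)
  also have "\<dots> < \<infinity>"
    using set_nn_integral_abs_finite[OF int] by (simp add: ennreal_add_less_top infinity_ennreal_def)
  finally have integrable: "integrable lborel (?u n)" for n
    by (intro integrableI_bounded) (auto simp: u)
  have "(\<lambda>n. \<integral>x. norm (?u n x) \<partial>lborel)
      = (\<lambda>n. enn2real (\<integral>\<^sup>+x\<in>{c..<c+L}. ennreal \<bar>dyadic_avg f n c L x - f x\<bar> \<partial>lborel))"
    by (subst integral_eq_nn_integral) (auto simp: u)
  also have "\<dots> \<longlonglongrightarrow> 0"
    using dyadic_avg_L1_convergence[OF _ int \<open>0 < L\<close>, of c] by (intro tendsto_enn2real) auto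
  finally have "(\<lambda>n. \<integral>x. norm (?u n x) \<partial>lborel) \<longlonglongrightarrow> 0" .
  then obtain r :: "nat \<Rightarrow> nat" where "strict_mono r" and r: "AE x in lborel. (\<lambda>n. ?u (r n) x) \<longlonglongrightarrow> 0"
    using tendsto_L1_AE_subseq[where u="?u", OF integrable] by blast
  have "AE x in lborel. x \<in> {c..<c+L} \<longrightarrow> (\<lambda>n. dyadic_avg f (r n) c L x) \<longlonglongrightarrow> f x"
    using r
  proof (rule AE_mp, intro AE_I2 impI)
    fix x assume "(\<lambda>n. ?u (r n) x) \<longlonglongrightarrow> 0" "x \<in> {c..<c+L}"
    then have "(\<lambda>n. (dyadic_avg f (r n) c L x - f x) + f x) \<longlonglongrightarrow> 0 + f x"
      by (intro tendsto_intros) simp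
    then show "(\<lambda>n. dyadic_avg f (r n) c L x) \<longlonglongrightarrow> f x"
      by simp
  qed
  with \<open>strict_mono r\<close> show ?thesis
    using that by blast
qed

section \<open>Exponential integrability and the \<open>A\<^sub>\<infinity>\<close> condition\<close>

lemma exp_moment_le_gagliardo_energy:
  fixes \<phi> :: "real \<Rightarrow> real"
  assumes [measurable]: "\<phi> \<in> borel_measurable borel" and int: "\<And>a b. set_integrable lborel {a..<b} \<phi>"
    and "0 < L" and energy: "gagliardo_energy \<phi> {c..<c+L} {c..<c+L} \<le> ennreal K" and "0 \<le> K"
  shows "(\<integral>\<^sup>+x\<in>{c..<c+L}. ennreal (exp (t * (\<phi> x - interval_avg \<phi> c L))) \<partial>lborel)
           \<le> ennreal (L * exp (t^2 * K / 2))"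
proof -
  obtain r :: "nat \<Rightarrow> nat"
    where r: "AE x in lborel. x \<in> {c..<c+L} \<longrightarrow> (\<lambda>n. dyadic_avg \<phi> (r n) c L x) \<longlonglongrightarrow> \<phi> x"
    using dyadic_avg_AE_convergent_subseq[OF _ int \<open>0 < L\<close>] by auto
  let ?m = "interval_avg \<phi> c L"
  let ?F = "\<lambda>n x. ennreal (exp (t * (dyadic_avg \<phi> (r n) c L x - ?m))) * indicator {c..<c+L} x"
  have "(\<integral>\<^sup>+x\<in>{c..<c+L}. ennreal (exp (t * (\<phi> x - ?m))) \<partial>lborel) = (\<integral>\<^sup>+x. liminf (\<lambda>n. ?F n x) \<partial>lborel)"
  proof (rule nn_integral_cong_AE)
    show "AE x in lborel. ennreal (exp (t * (\<phi> x - ?m))) * indicator {c..<c+L} x = liminf (\<lambda>n. ?F n x)"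
      using r
    proof (rule AE_mp, intro AE_I2 impI)
      fix x assume x: "x \<in> {c..<c+L} \<longrightarrow> (\<lambda>n. dyadic_avg \<phi> (r n) c L x) \<longlonglongrightarrow> \<phi> x"
      show "ennreal (exp (t * (\<phi> x - ?m))) * indicator {c..<c+L} x = liminf (\<lambda>n. ?F n x)"
      proof (cases "x \<in> {c..<c+L}")
        case True
        then have "(\<lambda>n. ?F n x) \<longlonglongrightarrow> ennreal (exp (t * (\<phi> x - ?m))) * indicator {c..<c+L} x"
          using x by (auto intro!: tendsto_intros)
        then show ?thesis
          by (simp add: lim_imp_Liminf)
      qed (simp add: Liminf_const)
    qed
  qed
  also have "\<dots> \<le> liminf (\<lambda>n. \<integral>\<^sup>+x. ?F n x \<partial>lborel)"
    by (rule nn_integral_liminf) measurable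
  also have "\<dots> \<le> ennreal (L * exp (t^2 * K / 2))"
  proof (rule Liminf_le, simp, intro always_eventually allI)
    fix n
    have "dyadic_sq_increments \<phi> (r n) c L \<le> K"
      using order_trans[OF dyadic_sq_increments_le_gagliardo_energy[OF _ \<open>0 < L\<close>] energy] \<open>0 \<le> K\<close>
      by simp
    then have "L * exp (t^2 * dyadic_sq_increments \<phi> (r n) c L / 2) \<le> L * exp (t^2 * K / 2)"
      using \<open>0 < L\<close> by (auto intro!: mult_left_mono divide_right_mono)
    then show "(\<integral>\<^sup>+x. ?F n x \<partial>lborel) \<le> ennreal (L * exp (t^2 * K / 2))"
      using dyadic_avg_exp_moment_le[OF int \<open>0 < L\<close>, of t "r n" c]
      by (meson ennreal_leI order_trans)
  qed
  finally show ?thesis .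
qed

lemma set_integrable_of_gagliardo_energy_finite:
  fixes \<phi> :: "real \<Rightarrow> real"
  assumes [measurable]: "\<phi> \<in> borel_measurable borel"
    and finite: "gagliardo_energy \<phi> {a..<b} {a..<b} < \<infinity>"
  shows "set_integrable lborel {a..<b} \<phi>"
proof (cases "a < b")
  case True
  let ?I = "{a..<b}"
  have "\<exists>s\<in>?I. (\<integral>\<^sup>+t\<in>?I. gagliardo_kernel \<phi> s t \<partial>lborel) < \<infinity>"
  proof (rule ccontr)
    assume "\<not> ?thesis"
    then have "gagliardo_energy \<phi> ?I ?I = (\<integral>\<^sup>+s. \<infinity> * indicator ?I s \<partial>lborel)"
      unfolding gagliardo_energy_def
      by (intro nn_integral_cong) (auto split: split_indicator simp: top_unique less_top[symmetric])
    also have "\<dots> = \<infinity>"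
      using True by (simp add: nn_integral_cmult_indicator ennreal_mult_top)
    finally show False
      using finite by simp
  qed
  then obtain s where "s \<in> ?I" and s: "(\<integral>\<^sup>+t\<in>?I. gagliardo_kernel \<phi> s t \<partial>lborel) < \<infinity>"
    by blast
  have "(\<integral>\<^sup>+t\<in>?I. ennreal ((\<phi> t - \<phi> s)^2) \<partial>lborel)
      \<le> ennreal ((b - a)^2) * (\<integral>\<^sup>+t\<in>?I. gagliardo_kernel \<phi> s t \<partial>lborel)"
    using \<open>s \<in> ?I\<close> by (intro nn_integral_sq_diff_le_gagliardo_kernel) auto
  also have "\<dots> < \<infinity>"
    using s by (simp add: ennreal_mult_less_top)
  finally have "set_integrable lborel ?I (\<lambda>t. \<phi> t - \<phi> s)"
    using True by (intro set_integrable_of_square_nn_integral_finite(2)) auto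
  then have "set_integrable lborel ?I (\<lambda>t. (\<phi> t - \<phi> s) + \<phi> s)"
    by (rule set_integral_add) (use True in \<open>simp add: set_integrable_def\<close>)
  then show ?thesis
    by simp
qed (simp add: set_integrable_def)

lemma set_integrable_lebesgue_Icc_iff:
  fixes f :: "real \<Rightarrow> real"
  assumes [measurable]: "f \<in> borel_measurable borel"
  shows "set_integrable lebesgue {a..b} f \<longleftrightarrow> set_integrable lborel {a..<b} f"
proof -
  have "AE x in lebesgue. indicator {a..b} x *\<^sub>R f x = indicator {a..<b} x *\<^sub>R f x"
    using AE_lborel_singleton[of b] by (auto simp: AE_completion_iff elim!: AE_mp split: split_indicator)
  then have "set_integrable lebesgue {a..b} f \<longleftrightarrow> integrable lebesgue (\<lambda>x. indicator {a..<b} x *\<^sub>R f x)"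
    unfolding set_integrable_def by (intro integrable_cong_AE) (auto intro: measurable_completion)
  also have "\<dots> \<longleftrightarrow> set_integrable lborel {a..<b} f"
    unfolding set_integrable_def by (rule integrable_completion) measurable
  finally show ?thesis .
qed

lemma set_integral_lebesgue_Icc_eq:
  fixes f :: "real \<Rightarrow> real"
  assumes [measurable]: "f \<in> borel_measurable borel"
  shows "(LINT x:{a..b}|lebesgue. f x) = (LINT x:{a..<b}|lborel. f x)"
proof -
  have "AE x in lebesgue. indicator {a..b} x *\<^sub>R f x = indicator {a..<b} x *\<^sub>R f x"
    using AE_lborel_singleton[of b] by (auto simp: AE_completion_iff elim!: AE_mp split: split_indicator)
  then have "(LINT x:{a..b}|lebesgue. f x) = integral\<^sup>L lebesgue (\<lambda>x. indicator {a..<b} x *\<^sub>R f x)"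
    unfolding set_lebesgue_integral_def by (intro integral_cong_AE) (auto intro: measurable_completion)
  also have "\<dots> = (LINT x:{a..<b}|lborel. f x)"
    unfolding set_lebesgue_integral_def by (rule integral_completion) measurable
  finally show ?thesis .
qed

lemma set_integrable_of_nn_integral_le:
  fixes f :: "'a \<Rightarrow> real"
  assumes [measurable]: "f \<in> borel_measurable M" "A \<in> sets M" and "\<And>x. 0 \<le> f x"
    and bound: "(\<integral>\<^sup>+x\<in>A. ennreal (f x) \<partial>M) \<le> ennreal B" and "0 \<le> B"
  shows "set_integrable M A f" "(LINT x:A|M. f x) \<le> B"
proof -
  have "(\<integral>\<^sup>+x. ennreal (indicator A x * f x) \<partial>M) = (\<integral>\<^sup>+x\<in>A. ennreal (f x) \<partial>M)"
    by (intro nn_integral_cong) (auto split: split_indicator)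
  then show int: "set_integrable M A f"
    unfolding set_integrable_def using assms(3) bound
    by (intro integrableI_nonneg) (auto simp: le_less_trans)
  show "(LINT x:A|M. f x) \<le> B"
    using bound \<open>0 \<le> B\<close> set_nn_integral_eq_set_integral_nonneg[OF int] assms(3) by simp
qed

lemma length_le_integral_exp_dev:
  fixes \<phi> :: "real \<Rightarrow> real"
  assumes "set_integrable lborel {c..<c+L} \<phi>" "set_integrable lborel {c..<c+L} (\<lambda>x. exp (\<phi> x - interval_avg \<phi> c L))"
    and "0 < L"
  shows "L \<le> (LINT x:{c..<c+L}|lborel. exp (\<phi> x - interval_avg \<phi> c L))"
proof -
  let ?m = "interval_avg \<phi> c L"
  have const: "set_integrable lborel {c..<c+L} (\<lambda>_. k)" for k :: real
    using \<open>0 < L\<close> unfolding set_integrable_def by simp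
  have "(LINT x:{c..<c+L}|lborel. 1 + (\<phi> x - ?m)) = L + ((LINT x:{c..<c+L}|lborel. \<phi> x) - L * ?m)"
    using assms const \<open>0 < L\<close> by (simp add: set_integral_add set_integral_diff set_integral_const)
  also have "(LINT x:{c..<c+L}|lborel. \<phi> x) = L * ?m"
    using \<open>0 < L\<close> by (simp add: interval_avg_def)
  finally have "L = (LINT x:{c..<c+L}|lborel. 1 + (\<phi> x - ?m))"
    by simp
  also have "\<dots> \<le> (LINT x:{c..<c+L}|lborel. exp (\<phi> x - ?m))"
    using assms const by (intro set_integral_mono set_integral_add set_integral_diff) (auto simp: exp_ge_add_one_self)
  finally show ?thesis .
qed

lemma exp_dev_integral_bounds:
  fixes \<phi> :: "real \<Rightarrow> real"
  assumes [measurable]: "\<phi> \<in> borel_measurable borel"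
    and energy: "gagliardo_energy \<phi> UNIV UNIV \<le> ennreal K" and "0 \<le> K" and "a < b"
  defines "g \<equiv> \<lambda>x. exp (\<phi> x - interval_avg \<phi> a (b - a))"
  shows "set_integrable lebesgue {a..b} g" "set_integrable lebesgue {a..b} (\<lambda>x. (g x)^2)"
    and "(LINT x:{a..b}|lebesgue. (g x)^2) \<le> (b - a) * exp (2 * K)"
    and "b - a \<le> (LINT x:{a..b}|lebesgue. g x)"
proof -
  define L where "L = b - a"
  have "0 < L" and b: "b = a + L"
    using \<open>a < b\<close> by (auto simp: L_def)
  have [measurable]: "g \<in> borel_measurable borel"
    unfolding g_def by measurable
  have "gagliardo_energy \<phi> {c..<d} {c..<d} < \<infinity>" for c d
    using order_trans[OF gagliardo_energy_mono[of "{c..<d}" UNIV "{c..<d}" UNIV \<phi>] energy]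
    by (auto simp: le_less_trans)
  then have int: "set_integrable lborel {c..<d} \<phi>" for c d
    by (intro set_integrable_of_gagliardo_energy_finite) auto
  have local_energy: "gagliardo_energy \<phi> {a..<a+L} {a..<a+L} \<le> ennreal K"
    using gagliardo_energy_mono[of "{a..<a+L}" UNIV "{a..<a+L}" UNIV \<phi>] energy by auto
  have "(\<integral>\<^sup>+x\<in>{a..<b}. ennreal (g x) \<partial>lborel) \<le> ennreal (L * exp (1^2 * K / 2))"
    using exp_moment_le_gagliardo_energy[OF _ int \<open>0 < L\<close> local_energy \<open>0 \<le> K\<close>, of 1]
    by (simp add: g_def L_def)
  then have g_int: "set_integrable lborel {a..<b} g"
    using \<open>0 < L\<close> by (intro set_integrable_of_nn_integral_le(1)) (auto simp: g_def)
  have "(g x)^2 = exp (2 * (\<phi> x - interval_avg \<phi> a L))" for x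
    by (simp add: g_def L_def power2_eq_square exp_add[symmetric])
  then have "(\<integral>\<^sup>+x\<in>{a..<b}. ennreal ((g x)^2) \<partial>lborel) \<le> ennreal (L * exp (2^2 * K / 2))"
    using exp_moment_le_gagliardo_energy[OF _ int \<open>0 < L\<close> local_energy \<open>0 \<le> K\<close>, of 2]
    by (simp add: b)
  then have g2_nn: "(\<integral>\<^sup>+x\<in>{a..<b}. ennreal ((g x)^2) \<partial>lborel) \<le> ennreal (L * exp (2 * K))"
    by simp
  have g2_int: "set_integrable lborel {a..<b} (\<lambda>x. (g x)^2)"
    and g2_le: "(LINT x:{a..<b}|lborel. (g x)^2) \<le> L * exp (2 * K)"
    using set_integrable_of_nn_integral_le[OF _ _ _ g2_nn] \<open>0 < L\<close> by auto
  show "set_integrable lebesgue {a..b} g" "set_integrable lebesgue {a..b} (\<lambda>x. (g x)^2)"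
    using g_int g2_int by (simp_all add: set_integrable_lebesgue_Icc_iff)
  show "(LINT x:{a..b}|lebesgue. (g x)^2) \<le> (b - a) * exp (2 * K)"
    using g2_le by (simp add: set_integral_lebesgue_Icc_eq L_def)
  show "b - a \<le> (LINT x:{a..b}|lebesgue. g x)"
    using length_le_integral_exp_dev[of a L \<phi>] int g_int \<open>0 < L\<close>
    by (simp add: set_integral_lebesgue_Icc_eq g_def b)
qed

lemma set_integral_le_sqrt_measure:
  fixes g :: "'a \<Rightarrow> real"
  assumes "set_integrable M A g" "set_integrable M A (\<lambda>x. (g x)^2)"
    and "E \<in> sets M" "E \<subseteq> A" "emeasure M E < \<infinity>"
  shows "(LINT x:E|M. g x) \<le> sqrt (measure M E * (LINT x:A|M. (g x)^2))"
proof -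
  have E_int: "set_integrable M E g" "set_integrable M E (\<lambda>x. (g x)^2)"
    using assms by (auto intro: set_integrable_subset)
  have "(LINT x:E|M. g x)^2 \<le> measure M E * (LINT x:E|M. (g x)^2)"
    using E_int assms(3,5) by (rule set_integral_square_le)
  also have "(LINT x:E|M. (g x)^2) \<le> (LINT x:A|M. (g x)^2)"
    using assms(2,4) E_int(2) unfolding set_lebesgue_integral_def set_integrable_def
    by (intro integral_mono) (auto split: split_indicator)
  finally show ?thesis
    by (intro real_le_rsqrt) (simp add: mult_left_mono)
qed

lemma exp_weight_A_infinity_estimate:
  fixes \<phi> w :: "real \<Rightarrow> real"
  assumes [measurable]: "\<phi> \<in> borel_measurable borel" "w \<in> borel_measurable borel"
    and energy: "gagliardo_energy \<phi> UNIV UNIV \<le> ennreal K" and "0 \<le> K"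
    and w: "AE x in lebesgue. w x = exp (\<phi> x)" and "a < b"
    and E: "E \<in> sets lebesgue" "E \<subseteq> {a..b}"
  shows "set_integrable lebesgue {a..b} w"
    and "(LINT x:E|lebesgue. w x) \<le> exp K * (measure lebesgue E / (b - a)) powr (1/2) * (LINT x:{a..b}|lebesgue. w x)"
proof -
  define m where "m = interval_avg \<phi> a (b - a)"
  define g where "g x = exp (\<phi> x - m)" for x
  note g_bounds = exp_dev_integral_bounds[OF assms(1) energy \<open>0 \<le> K\<close> \<open>a < b\<close>, folded m_def, folded g_def]
  have [measurable]: "g \<in> borel_measurable lebesgue" "w \<in> borel_measurable lebesgue"
    unfolding g_def by (auto intro: measurable_completion)
  have w_eq: "AE x in lebesgue. w x = exp m * g x"
    using w by eventually_elim (simp add: g_def mult_exp_exp)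
  have set_integral_w: "(LINT x:A|lebesgue. w x) = exp m * (LINT x:A|lebesgue. g x)" if "A \<in> sets lebesgue" for A
  proof -
    have "(LINT x:A|lebesgue. w x) = (LINT x:A|lebesgue. exp m * g x)"
      by (rule set_lebesgue_integral_cong_AE[OF that]) (use w_eq in \<open>auto elim: AE_mp\<close>)
    then show ?thesis by simp
  qed
  have "set_integrable lebesgue {a..b} (\<lambda>x. exp m * g x)"
    using g_bounds(1) by simp
  then show "set_integrable lebesgue {a..b} w"
    by (subst set_integrable_cong_AE[where g="\<lambda>x. exp m * g x"]) (use w_eq in \<open>auto elim: AE_mp\<close>)
  have "emeasure lebesgue E \<le> emeasure lebesgue {a..b}"
    using E by (intro emeasure_mono) auto
  then have "emeasure lebesgue E < \<infinity>"
    using \<open>a < b\<close> by (auto simp: le_less_trans)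
  then have "(LINT x:E|lebesgue. g x) \<le> sqrt (measure lebesgue E * (LINT x:{a..b}|lebesgue. (g x)^2))"
    using E g_bounds(1,2) by (intro set_integral_le_sqrt_measure) auto
  also have "\<dots> \<le> sqrt (measure lebesgue E * ((b - a) * exp (2 * K)))"
    using g_bounds(3) by (intro real_sqrt_le_mono mult_left_mono) auto
  also have "\<dots> = exp K * (measure lebesgue E / (b - a)) powr (1/2) * (b - a)"
  proof -
    have "(exp K * sqrt (measure lebesgue E / (b - a)) * (b - a))^2
        = (exp K)^2 * (measure lebesgue E / (b - a)) * (b - a)^2"
      using \<open>a < b\<close> by (simp add: power_mult_distrib)
    also have "\<dots> = measure lebesgue E * ((b - a) * exp (2 * K))"
      using \<open>a < b\<close> by (simp add: exp_double power2_eq_square)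
    finally have "measure lebesgue E * ((b - a) * exp (2 * K))
        = (exp K * sqrt (measure lebesgue E / (b - a)) * (b - a))^2" ..
    then show ?thesis
      using \<open>a < b\<close> by (simp add: powr_half_sqrt)
  qed
  also have "\<dots> \<le> exp K * (measure lebesgue E / (b - a)) powr (1/2) * (LINT x:{a..b}|lebesgue. g x)"
    using g_bounds(4) by (intro mult_left_mono) auto
  finally show "(LINT x:E|lebesgue. w x)
      \<le> exp K * (measure lebesgue E / (b - a)) powr (1/2) * (LINT x:{a..b}|lebesgue. w x)"
    using E set_integral_w by (simp add: mult_left_mono mult.left_commute)
qed

lemma A_infinity_exp:
  fixes \<phi> w :: "real \<Rightarrow> real"
  assumes [measurable]: "\<phi> \<in> borel_measurable borel" "w \<in> borel_measurable borel"
    and energy: "gagliardo_energy \<phi> UNIV UNIV < \<infinity>" and w: "AE x in lebesgue. w x = exp (\<phi> x)"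
  shows "A_infinity w"
proof -
  define K where "K = enn2real (gagliardo_energy \<phi> UNIV UNIV)"
  have K: "gagliardo_energy \<phi> UNIV UNIV \<le> ennreal K" "0 \<le> K"
    using energy by (auto simp: K_def ennreal_enn2real_if less_top[symmetric])
  note estimate = exp_weight_A_infinity_estimate[OF assms(1,2) K w]
  show ?thesis
    unfolding A_infinity_def
  proof (intro conjI allI)
    show "AE x in lebesgue. 0 \<le> w x"
      using w by eventually_elim simp
    fix a b :: real
    have "set_integrable lebesgue {a..max b (a + 1)} w"
      by (rule estimate(1)[of a "max b (a + 1)" "{}"]) auto
    then show "set_integrable lebesgue {a..b} w"
      by (rule set_integrable_subset) auto
  next
    show "\<exists>C>0. \<exists>\<alpha>>0. \<forall>a b. a < b \<longrightarrow> (\<forall>E\<in>sets lebesgue. E \<subseteq> {a..b} \<longrightarrow>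
        (LINT x:E|lebesgue. w x) \<le> C * (measure lebesgue E / (b - a)) powr \<alpha> * (LINT x:{a..b}|lebesgue. w x))"
      using estimate(2) by (intro exI[of _ "exp K"] conjI exI[of _ "1/2"]) auto
  qed
qed

section \<open>Measurability of derivatives\<close>

definition diff_quotient :: "(real \<Rightarrow> real) \<Rightarrow> real \<Rightarrow> real \<Rightarrow> real" where
  "diff_quotient h x y = (h (x + y) - h x) / y"

text \<open>The Cauchy criterion for \<^term>\<open>diff_quotient h x\<close> at \<open>0\<close>, tested only at rational
  increments so that it is a countable condition.\<close>

definition rat_Cauchy_diff_quotient :: "(real \<Rightarrow> real) \<Rightarrow> real \<Rightarrow> bool" where
  "rat_Cauchy_diff_quotient h x \<longleftrightarrow> (\<forall>k::nat. \<exists>m::nat. \<forall>p q :: rat.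
      real_of_rat p \<noteq> 0 \<longrightarrow> real_of_rat q \<noteq> 0 \<longrightarrow>
      \<bar>real_of_rat p\<bar> < 1 / (real m + 1) \<longrightarrow> \<bar>real_of_rat q\<bar> < 1 / (real m + 1) \<longrightarrow>
      \<bar>diff_quotient h x (real_of_rat p) - diff_quotient h x (real_of_rat q)\<bar> \<le> 1 / (real k + 1))"

lemma rat_Cauchy_diff_quotient_measurable [measurable]:
  assumes [measurable]: "h \<in> borel_measurable borel"
  shows "Measurable.pred borel (rat_Cauchy_diff_quotient h)"
  unfolding rat_Cauchy_diff_quotient_def diff_quotient_def by measurable

lemma ex_inverse_Suc_less:
  assumes "0 < (e::real)"
  obtains k :: nat where "1 / (real k + 1) < e"
proof -
  obtain k :: nat where "1 / e < real k"
    using reals_Archimedean2 by blast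
  then have "1 / (real k + 1) < e"
    using assms by (simp add: field_simps)
  then show ?thesis using that by blast
qed

lemma DERIV_imp_rat_Cauchy_diff_quotient:
  assumes "DERIV h x :> l"
  shows "rat_Cauchy_diff_quotient h x"
  unfolding rat_Cauchy_diff_quotient_def
proof
  fix k :: nat
  let ?e = "1 / (2 * (real k + 1))"
  have "(diff_quotient h x \<longlongrightarrow> l) (at 0)"
    using assms by (simp add: DERIV_def diff_quotient_def[abs_def])
  moreover have "0 < ?e" by simp
  ultimately obtain d where "0 < d" and d: "\<And>y. y \<noteq> 0 \<Longrightarrow> \<bar>y\<bar> < d \<Longrightarrow> \<bar>diff_quotient h x y - l\<bar> < ?e"
    unfolding LIM_eq by (metis diff_0_right real_norm_def)
  obtain m :: nat where "1 / (real m + 1) < d"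
    using ex_inverse_Suc_less[OF \<open>0 < d\<close>] .
  have "\<bar>diff_quotient h x y - diff_quotient h x z\<bar> \<le> 1 / (real k + 1)"
    if "y \<noteq> 0" "z \<noteq> 0" "\<bar>y\<bar> < 1 / (real m + 1)" "\<bar>z\<bar> < 1 / (real m + 1)" for y z
  proof -
    have "\<bar>diff_quotient h x y - l\<bar> < ?e" "\<bar>diff_quotient h x z - l\<bar> < ?e"
      using d that \<open>1 / (real m + 1) < d\<close> by auto
    then have "\<bar>diff_quotient h x y - diff_quotient h x z\<bar> \<le> 2 * ?e"
      by linarith
    also have "2 * ?e = 1 / (real k + 1)"
      by (simp add: divide_simps)
    finally show ?thesis .
  qed
  then show "\<exists>m::nat. \<forall>p q :: rat. real_of_rat p \<noteq> 0 \<longrightarrow> real_of_rat q \<noteq> 0 \<longrightarrow>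
      \<bar>real_of_rat p\<bar> < 1 / (real m + 1) \<longrightarrow> \<bar>real_of_rat q\<bar> < 1 / (real m + 1) \<longrightarrow>
      \<bar>diff_quotient h x (real_of_rat p) - diff_quotient h x (real_of_rat q)\<bar> \<le> 1 / (real k + 1)"
    by blast
qed

lemma le_on_open_of_le_on_rationals:
  fixes g :: "real \<Rightarrow> real"
  assumes "open U" "continuous_on U g" "\<And>p::rat. real_of_rat p \<in> U \<Longrightarrow> g (real_of_rat p) \<le> c"
    and "y \<in> U"
  shows "g y \<le> c"
proof (rule ccontr)
  assume "\<not> g y \<le> c"
  then have "y \<in> U \<inter> g -` {c<..}"
    using \<open>y \<in> U\<close> by auto
  moreover have "open (U \<inter> g -` {c<..})"
    by (rule continuous_open_preimage[OF assms(2,1)]) auto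
  ultimately obtain e where "0 < e" and e: "ball y e \<subseteq> U \<inter> g -` {c<..}"
    by (meson openE)
  obtain q where "q \<in> \<rat>" "y - e < q" "q < y + e"
    using Rats_dense_in_real[of "y - e" "y + e"] \<open>0 < e\<close> by auto
  then obtain p where "q = real_of_rat p" "q \<in> ball y e"
    by (auto simp: Rats_def dist_real_def)
  then have "real_of_rat p \<in> U" "c < g (real_of_rat p)"
    using e by auto
  then show False
    using assms(3) by (meson not_le)
qed

lemma tendsto_at_0_of_Cauchy:
  fixes F :: "real \<Rightarrow> real"
  assumes "\<And>e. 0 < e \<Longrightarrow> \<exists>d>0. \<forall>y z. y \<noteq> 0 \<longrightarrow> z \<noteq> 0 \<longrightarrow> \<bar>y\<bar> < d \<longrightarrow> \<bar>z\<bar> < d \<longrightarrow> \<bar>F y - F z\<bar> < e"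
  obtains l where "(F \<longlongrightarrow> l) (at 0)"
proof -
  have cauchy: "cauchy_filter (filtermap F (at 0))"
    unfolding cauchy_filter_metric_filtermap
  proof (intro allI impI)
    fix e :: real assume "0 < e"
    then obtain d where "0 < d"
      and d: "\<forall>y z. y \<noteq> 0 \<longrightarrow> z \<noteq> 0 \<longrightarrow> \<bar>y\<bar> < d \<longrightarrow> \<bar>z\<bar> < d \<longrightarrow> \<bar>F y - F z\<bar> < e"
      using assms by blast
    have "eventually (\<lambda>y. y \<noteq> 0 \<and> \<bar>y\<bar> < d) (at 0)"
      using \<open>0 < d\<close> by (auto simp: eventually_at dist_real_def)
    then show "\<exists>P. eventually P (at 0) \<and> (\<forall>y z. P y \<and> P z \<longrightarrow> dist (F y) (F z) < e)"
      using d by (auto simp: dist_real_def)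
  qed
  have "filtermap F (at 0) \<noteq> bot"
    by (simp add: filtermap_bot_iff)
  then obtain l where "filtermap F (at 0) \<le> nhds l"
    using cauchy_filter_complete_converges[OF cauchy complete_UNIV] by (auto simp: principal_UNIV)
  then show ?thesis
    using that by (auto simp: filterlim_def)
qed

lemma rat_Cauchy_diff_quotient_imp_Cauchy:
  assumes h: "continuous_on UNIV h" and Cauchy: "rat_Cauchy_diff_quotient h x"
  shows "\<exists>m::nat. \<forall>y z. y \<noteq> 0 \<longrightarrow> z \<noteq> 0 \<longrightarrow> \<bar>y\<bar> < 1 / (real m + 1) \<longrightarrow>
      \<bar>z\<bar> < 1 / (real m + 1) \<longrightarrow> \<bar>diff_quotient h x y - diff_quotient h x z\<bar> \<le> 1 / (real k + 1)"
proof -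
  obtain m :: nat where m: "\<And>p q. real_of_rat p \<noteq> 0 \<Longrightarrow> real_of_rat q \<noteq> 0 \<Longrightarrow>
      \<bar>real_of_rat p\<bar> < 1 / (real m + 1) \<Longrightarrow> \<bar>real_of_rat q\<bar> < 1 / (real m + 1) \<Longrightarrow>
      \<bar>diff_quotient h x (real_of_rat p) - diff_quotient h x (real_of_rat q)\<bar> \<le> 1 / (real k + 1)"
    using Cauchy unfolding rat_Cauchy_diff_quotient_def by blast
  define U where "U = ball 0 (1 / (real m + 1)) - {0::real}"
  have "open U"
    unfolding U_def by (intro open_Diff) auto
  have U_iff: "y \<in> U \<longleftrightarrow> y \<noteq> 0 \<and> \<bar>y\<bar> < 1 / (real m + 1)" for y
    by (auto simp: U_def)
  have "continuous_on (- {0}) (\<lambda>y. h (x + y))"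
    by (rule continuous_on_compose2[OF h]) (auto intro: continuous_intros)
  then have "continuous_on (- {0}) (diff_quotient h x)"
    unfolding diff_quotient_def[abs_def] by (intro continuous_intros) auto
  then have cont: "continuous_on U (diff_quotient h x)"
    by (rule continuous_on_subset) (auto simp: U_def)
  have rat_right: "\<bar>diff_quotient h x y - diff_quotient h x (real_of_rat q)\<bar> \<le> 1 / (real k + 1)"
    if "y \<in> U" "real_of_rat q \<in> U" for y q
    by (rule le_on_open_of_le_on_rationals[OF \<open>open U\<close> _ _ that(1)])
      (use that m U_iff in \<open>auto intro!: continuous_intros cont\<close>)
  have "\<bar>diff_quotient h x y - diff_quotient h x z\<bar> \<le> 1 / (real k + 1)" if "y \<in> U" "z \<in> U" for y z
    by (rule le_on_open_of_le_on_rationals[OF \<open>open U\<close> _ _ that(2)])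
      (use that rat_right in \<open>auto intro!: continuous_intros cont\<close>)
  then show ?thesis
    using U_iff by blast
qed

lemma rat_Cauchy_diff_quotient_imp_DERIV:
  assumes h: "continuous_on UNIV h" and Cauchy: "rat_Cauchy_diff_quotient h x"
  obtains l where "DERIV h x :> l"
proof -
  obtain l where "(diff_quotient h x \<longlongrightarrow> l) (at 0)"
  proof (rule tendsto_at_0_of_Cauchy)
    fix e :: real assume "0 < e"
    then obtain k :: nat where k: "1 / (real k + 1) < e"
      by (rule ex_inverse_Suc_less)
    obtain m :: nat where m: "\<forall>y z. y \<noteq> 0 \<longrightarrow> z \<noteq> 0 \<longrightarrow> \<bar>y\<bar> < 1 / (real m + 1) \<longrightarrow>
        \<bar>z\<bar> < 1 / (real m + 1) \<longrightarrow> \<bar>diff_quotient h x y - diff_quotient h x z\<bar> \<le> 1 / (real k + 1)"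
      using rat_Cauchy_diff_quotient_imp_Cauchy[OF h Cauchy] by blast
    show "\<exists>d>0. \<forall>y z. y \<noteq> 0 \<longrightarrow> z \<noteq> 0 \<longrightarrow> \<bar>y\<bar> < d \<longrightarrow> \<bar>z\<bar> < d
        \<longrightarrow> \<bar>diff_quotient h x y - diff_quotient h x z\<bar> < e"
    proof (intro exI[of _ "1 / (real m + 1)"] conjI allI impI)
      fix y z assume yz: "y \<noteq> 0" "z \<noteq> 0" "\<bar>y\<bar> < 1 / (real m + 1)" "\<bar>z\<bar> < 1 / (real m + 1)"
      show "\<bar>diff_quotient h x y - diff_quotient h x z\<bar> < e"
        using m[rule_format, OF yz] k by linarith
    qed simp
  qed
  then show ?thesis
    using that by (simp add: DERIV_def diff_quotient_def[abs_def])
qed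

text \<open>Where \<^term>\<open>h\<close> is not differentiable, \<^term>\<open>deriv h x\<close> is the junk value
  \<^term>\<open>SOME D::real. False\<close>.\<close>

lemma borel_measurable_deriv:
  fixes h :: "real \<Rightarrow> real"
  assumes h: "continuous_on UNIV h"
  shows "deriv h \<in> borel_measurable borel"
proof -
  have [measurable]: "h \<in> borel_measurable borel"
    using h by (rule borel_measurable_continuous_onI)
  have deriv_eq: "deriv h x = (if rat_Cauchy_diff_quotient h x
      then lim (\<lambda>n. diff_quotient h x (1 / (real n + 1))) else (SOME D. False))" for x
  proof (cases "rat_Cauchy_diff_quotient h x")
    case True
    then obtain l where l: "DERIV h x :> l"
      using rat_Cauchy_diff_quotient_imp_DERIV[OF h] by blast
    have "filterlim (\<lambda>n. 1 / (real n + 1)) (at 0) sequentially"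
      using LIMSEQ_inverse_real_of_nat
      by (intro filterlim_atI) (auto simp: inverse_eq_divide add.commute)
    moreover have "(diff_quotient h x \<longlongrightarrow> l) (at 0)"
      using l by (simp add: DERIV_def diff_quotient_def[abs_def])
    ultimately have "(\<lambda>n. diff_quotient h x (1 / (real n + 1))) \<longlonglongrightarrow> l"
      by (rule filterlim_compose[rotated])
    then show ?thesis
      using True l by (simp add: DERIV_imp_deriv limI)
  next
    case False
    then have "\<not> (DERIV h x :> D)" for D
      using DERIV_imp_rat_Cauchy_diff_quotient by blast
    then show ?thesis
      using False by (simp add: deriv_def)
  qed
  have "deriv h = (\<lambda>x. if rat_Cauchy_diff_quotient h x
      then lim (\<lambda>n. diff_quotient h x (1 / (real n + 1))) else (SOME D. False))"
    by (rule ext) (fact deriv_eq)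
  moreover have "(\<lambda>x. if rat_Cauchy_diff_quotient h x
      then lim (\<lambda>n. diff_quotient h x (1 / (real n + 1))) else (SOME D::real. False)) \<in> borel_measurable borel"
    unfolding diff_quotient_def by measurable
  ultimately show ?thesis
    by simp
qed

theorem lemma5p2:
  fixes h :: "real \<Rightarrow> real"
  assumes "strict_mono h"
    and "\<exists>g. homeomorphism UNIV UNIV h g"
    and "locally_abs_cont h"
    and "AE x in lebesgue. deriv h x > 0"
    and "H12_sq (\<lambda>x. ln (deriv h x)) < \<infinity>"
  shows "strongly_quasisymmetric h"
proof -
  have "continuous_on UNIV h"
    using assms(2) by (auto simp: homeomorphism_def)
  then have [measurable]: "deriv h \<in> borel_measurable borel"
    by (rule borel_measurable_deriv)
  then have "H12_sq (\<lambda>x. ln (deriv h x))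
      = ennreal (1 / (4 * pi^2)) * gagliardo_energy (\<lambda>x. ln (deriv h x)) UNIV UNIV"
    by (intro H12_sq_eq_gagliardo_energy) measurable
  then have energy: "gagliardo_energy (\<lambda>x. ln (deriv h x)) UNIV UNIV < \<infinity>"
    using assms(5) by (auto simp: ennreal_mult_less_top)
  have weight: "AE x in lebesgue. \<bar>deriv h x\<bar> = exp (ln (deriv h x))"
    using assms(4) by eventually_elim simp
  have "A_infinity (\<lambda>x. \<bar>deriv h x\<bar>)"
    by (rule A_infinity_exp[OF _ _ energy weight]) measurable
  then show ?thesis
    unfolding strongly_quasisymmetric_def using assms(1-3) by blast
qed

end
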